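(* Let $A$ be a Hopf algebra over a field $k$ and $(H,\Delta,\Delta')$ a commutative Hopf brace with first antipode $S$. Suppose $(A,H,\rho,\varphi)$ is a Hopf matched pair (with $H$ carrying the Hopf structure given by $\Delta$), $\rho(a)=a_{(-1)}\otimes a_{(0)}$, $\varphi(h)=h_{[0]}\otimes h_{[1]}$, and suppose $\rho':A\to H\otimes A$, $\rho'(a)=a_{(-1)'}\otimes a_{(0)'}$, makes $A$ a left $H_{\Delta'}$-comodule bialgebra, where $H_{\Delta'}=(H,m,1,\Delta',\epsilon,T)$. On the tensor product algebra $A\otimes H$ consider the comultiplications $$\widetilde{\Delta}(a\otimes h)=a_1\otimes a_{2(-1)}h_{1[0]}\otimes a_{2(0)}h_{1[1]}\otimes h_2\quad(\text{bicrossed coproduct }A\bowtie H),$$ $$\bar{\Delta}(a\otimes h)=a_1\otimes a_{2(-1)'}h_{1'}\otimes a_{2(0)'}\otimes h_{2'}\quad(\text{smash coproduct on }A\otimes H_{\Delta'}).$$ Then $(A\bowtie H,\widetilde{\Delta},\bar{\Delta})$ is a Hopf brace if and only if, for all $a\in A$ and $h\in H$, $$a_{(-1)'}\otimes a_{(0)'(-1)}\otimes a_{(0)'(0)}=a_{(-1)11'}S(a_{(-1)2})a_{(0)(-1)'}\otimes a_{(-1)12'}\otimes a_{(0)(0)'},$$ $$h_{1'}\otimes h_{2'[0]}\otimes h_{2'[1]}=h_{1[0]11'}S(h_{1[0]2})h_{1[1](-1)'}h_2\otimes h_{1[0]12'}\otimes h_{1[1](0)'}.$$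
   Context: All objects are over a field $k$. Sweedler notation: comultiplication of $A$ written $a_1\otimes a_2$; on $H$, $\Delta(h)=h_1\otimes h_2$ and $\Delta'(h)=h_{1'}\otimes h_{2'}$; mixed indices like $x_{11'}\otimes x_{12'}$ mean $\Delta'$ applied to $x_1$. A Hopf brace $(B,\Delta,\Delta')$ consists of an algebra with two Hopf algebra structures $(B,m,1,\Delta,\varepsilon,S)$ and $(B,m,1,\Delta',\epsilon,T)$ such that for all $h$: $h_{1'}\otimes h_{2'1}\otimes h_{2'2}=h_{11'}S(h_2)h_{31'}\otimes h_{12'}\otimes h_{32'}$; it is commutative if the algebra is commutative. A left comodule bialgebra is a left comodule whose coaction is an algebra map and which is a comodule coalgebra ($a_{(-1)'}\otimes a_{(0)'1}\otimes a_{(0)'2}=a_{1(-1)'}a_{2(-1)'}\otimes a_{1(0)'}\otimes a_{2(0)'}$, $a_{(-1)'}\varepsilon(a_{(0)'})=\varepsilon(a)1$). Hopf matched pair $(A,H,\rho,\varphi)$ for Hopf algebras $A,H$: $\rho:A\to H\otimes A$ makes $A$ a left $H$-comodule algebra, $\varphi:H\to H\otimes A$ makes $H$ a right $A$-comodule algebra, and for all $a,h$: (HM1) $a_{(-1)}\varepsilon_A(a_{(0)})=\varepsilon_A(a)1_H$, $\varepsilon_H(h_{[0]})h_{[1]}=\varepsilon_H(h)1_A$; (HM2) $a_{(-1)}\otimes a_{(0)1}\otimes a_{(0)2}=a_{1(-1)}a_{2(-1)[0]}\otimes a_{1(0)}a_{2(-1)[1]}\otimes a_{2(0)}$; (HM3)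 $h_{[0]1}\otimes h_{[0]2}\otimes h_{[1]}=h_{1[0]}\otimes h_{1[1](-1)}h_{2[0]}\otimes h_{1[1](0)}h_{2[1]}$; (HM4) $h_{[0]}a_{(-1)}\otimes h_{[1]}a_{(0)}=a_{(-1)}h_{[0]}\otimes a_{(0)}h_{[1]}$. For a Hopf matched pair, $A\otimes H$ with the tensor product algebra and comultiplication $\widetilde{\Delta}$ above is a Hopf algebra (the bicrossed coproduct $A\bowtie H$); likewise $A\otimes H_{\Delta'}$ with $\bar{\Delta}$ is a Hopf algebra (smash coproduct). *)

theory Defs
  imports "HOL-Library.Poly_Mapping"
begin

text \<open>
  A vector space over the field 'k is represented by
  the free vector space on a basis type 'b, i.e. finitely supported functions
  (every vector space has a basis).  The tensor product of
  the spaces with bases 'b and 'c is the free space on 'b \<times> 'c.  Linear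
  maps are given by their values on basis vectors and extended linearly by lin.
  Sweedler sums become nested applications of lin with bound basis indices.
\<close>

definition bv :: "'b \<Rightarrow> ('b \<Rightarrow>\<^sub>0 'k::field)" where
  "bv x = Poly_Mapping.single x 1"

definition smult :: "'k::field \<Rightarrow> ('b \<Rightarrow>\<^sub>0 'k) \<Rightarrow> ('b \<Rightarrow>\<^sub>0 'k)" where
  "smult c v = Poly_Mapping.map (\<lambda>t. c * t) v"

definition lin :: "('b \<Rightarrow> ('c \<Rightarrow>\<^sub>0 'k::field)) \<Rightarrow> ('b \<Rightarrow>\<^sub>0 'k) \<Rightarrow> ('c \<Rightarrow>\<^sub>0 'k)" where
  "lin f v = (\<Sum>x\<in>Poly_Mapping.keys v. smult (Poly_Mapping.lookup v x) (f x))"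

definition linf :: "('b \<Rightarrow> 'k::field) \<Rightarrow> ('b \<Rightarrow>\<^sub>0 'k) \<Rightarrow> 'k" where
  "linf f v = (\<Sum>x\<in>Poly_Mapping.keys v. Poly_Mapping.lookup v x * f x)"

definition tens :: "('b \<Rightarrow>\<^sub>0 'k::field) \<Rightarrow> ('c \<Rightarrow>\<^sub>0 'k) \<Rightarrow> ('b \<times> 'c \<Rightarrow>\<^sub>0 'k)" where
  "tens u v = lin (\<lambda>x. lin (\<lambda>y. bv (x, y)) v) u"

definition mulv :: "('b \<Rightarrow> 'b \<Rightarrow> ('b \<Rightarrow>\<^sub>0 'k::field)) \<Rightarrow> ('b \<Rightarrow>\<^sub>0 'k) \<Rightarrow> ('b \<Rightarrow>\<^sub>0 'k) \<Rightarrow> ('b \<Rightarrow>\<^sub>0 'k)" where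
  "mulv m u v = lin (\<lambda>x. lin (\<lambda>y. m x y) v) u"

definition tmul :: "('b \<Rightarrow> 'b \<Rightarrow> ('b \<Rightarrow>\<^sub>0 'k::field)) \<Rightarrow> ('c \<Rightarrow> 'c \<Rightarrow> ('c \<Rightarrow>\<^sub>0 'k))
    \<Rightarrow> 'b \<times> 'c \<Rightarrow> 'b \<times> 'c \<Rightarrow> ('b \<times> 'c \<Rightarrow>\<^sub>0 'k)" where
  "tmul m1 m2 p q = tens (m1 (fst p) (fst q)) (m2 (snd p) (snd q))"

definition is_algebra :: "('b \<Rightarrow> 'b \<Rightarrow> ('b \<Rightarrow>\<^sub>0 'k::field)) \<Rightarrow> ('b \<Rightarrow>\<^sub>0 'k) \<Rightarrow> bool" where
  "is_algebra m u \<longleftrightarrow>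
     (\<forall>x y z. mulv m (m x y) (bv z) = mulv m (bv x) (m y z)) \<and>
     (\<forall>x. mulv m u (bv x) = bv x \<and> mulv m (bv x) u = bv x)"

definition is_coalgebra :: "('b \<Rightarrow> ('b \<times> 'b \<Rightarrow>\<^sub>0 'k::field)) \<Rightarrow> ('b \<Rightarrow> 'k) \<Rightarrow> bool" where
  "is_coalgebra \<Delta> \<epsilon> \<longleftrightarrow>
     (\<forall>x. lin (\<lambda>(y, z). lin (\<lambda>(y1, y2). bv (y1, y2, z)) (\<Delta> y)) (\<Delta> x)
        = lin (\<lambda>(y, z). lin (\<lambda>(z1, z2). bv (y, z1, z2)) (\<Delta> z)) (\<Delta> x)) \<and>
     (\<forall>x. lin (\<lambda>(y, z). smult (\<epsilon> y) (bv z)) (\<Delta> x) = bv x \<and>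
          lin (\<lambda>(y, z). smult (\<epsilon> z) (bv y)) (\<Delta> x) = bv x)"

definition is_bialgebra ::
  "('b \<Rightarrow> 'b \<Rightarrow> ('b \<Rightarrow>\<^sub>0 'k::field)) \<Rightarrow> ('b \<Rightarrow>\<^sub>0 'k) \<Rightarrow> ('b \<Rightarrow> ('b \<times> 'b \<Rightarrow>\<^sub>0 'k)) \<Rightarrow> ('b \<Rightarrow> 'k) \<Rightarrow> bool" where
  "is_bialgebra m u \<Delta> \<epsilon> \<longleftrightarrow>
     is_algebra m u \<and> is_coalgebra \<Delta> \<epsilon> \<and>
     (\<forall>x y. lin \<Delta> (m x y) = mulv (tmul m m) (\<Delta> x) (\<Delta> y)) \<and>
     lin \<Delta> u = tens u u \<and>
     (\<forall>x y. linf \<epsilon> (m x y) = \<epsilon> x * \<epsilon> y) \<and>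
     linf \<epsilon> u = 1"

definition is_hopf_algebra ::
  "('b \<Rightarrow> 'b \<Rightarrow> ('b \<Rightarrow>\<^sub>0 'k::field)) \<Rightarrow> ('b \<Rightarrow>\<^sub>0 'k) \<Rightarrow> ('b \<Rightarrow> ('b \<times> 'b \<Rightarrow>\<^sub>0 'k)) \<Rightarrow> ('b \<Rightarrow> 'k)
    \<Rightarrow> ('b \<Rightarrow> ('b \<Rightarrow>\<^sub>0 'k)) \<Rightarrow> bool" where
  "is_hopf_algebra m u \<Delta> \<epsilon> S \<longleftrightarrow>
     is_bialgebra m u \<Delta> \<epsilon> \<and>
     (\<forall>x. lin (\<lambda>(y, z). mulv m (S y) (bv z)) (\<Delta> x) = smult (\<epsilon> x) u \<and>
          lin (\<lambda>(y, z). mulv m (bv y) (S z)) (\<Delta> x) = smult (\<epsilon> x) u)"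

definition is_commutative :: "('b \<Rightarrow> 'b \<Rightarrow> ('b \<Rightarrow>\<^sub>0 'k::field)) \<Rightarrow> bool" where
  "is_commutative m \<longleftrightarrow> (\<forall>x y. m x y = m y x)"

text \<open>h_{1'} \<otimes> h_{2'1} \<otimes> h_{2'2} = h_{11'} S(h_2) h_{31'} \<otimes> h_{12'} \<otimes> h_{32'}\<close>
definition is_hopf_brace ::
  "('b \<Rightarrow> 'b \<Rightarrow> ('b \<Rightarrow>\<^sub>0 'k::field)) \<Rightarrow> ('b \<Rightarrow>\<^sub>0 'k)
   \<Rightarrow> ('b \<Rightarrow> ('b \<times> 'b \<Rightarrow>\<^sub>0 'k)) \<Rightarrow> ('b \<Rightarrow> 'k) \<Rightarrow> ('b \<Rightarrow> ('b \<Rightarrow>\<^sub>0 'k))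
   \<Rightarrow> ('b \<Rightarrow> ('b \<times> 'b \<Rightarrow>\<^sub>0 'k)) \<Rightarrow> ('b \<Rightarrow> 'k) \<Rightarrow> ('b \<Rightarrow> ('b \<Rightarrow>\<^sub>0 'k)) \<Rightarrow> bool" where
  "is_hopf_brace m u \<Delta> \<epsilon> S \<Delta>' \<epsilon>' T \<longleftrightarrow>
     is_hopf_algebra m u \<Delta> \<epsilon> S \<and> is_hopf_algebra m u \<Delta>' \<epsilon>' T \<and>
     (\<forall>h. lin (\<lambda>(x, y). lin (\<lambda>(y1, y2). bv (x, y1, y2)) (\<Delta> y)) (\<Delta>' h)
        = lin (\<lambda>(x, y). lin (\<lambda>(x1, x2). lin (\<lambda>(x11, x12). lin (\<lambda>(y1, y2).
              tens (mulv m (mulv m (bv x11) (S x2)) (bv y1)) (bv (x12, y2)))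
            (\<Delta>' y)) (\<Delta>' x1)) (\<Delta> x)) (\<Delta> h))"

text \<open>(B, \<Delta>, \<Delta>') is a Hopf brace: counits and antipodes exist (they are
  unique when they exist).\<close>
definition hopf_brace_coproducts ::
  "('b \<Rightarrow> 'b \<Rightarrow> ('b \<Rightarrow>\<^sub>0 'k::field)) \<Rightarrow> ('b \<Rightarrow>\<^sub>0 'k)
   \<Rightarrow> ('b \<Rightarrow> ('b \<times> 'b \<Rightarrow>\<^sub>0 'k)) \<Rightarrow> ('b \<Rightarrow> ('b \<times> 'b \<Rightarrow>\<^sub>0 'k)) \<Rightarrow> bool" where
  "hopf_brace_coproducts m u \<Delta> \<Delta>' \<longleftrightarrow>
     (\<exists>\<epsilon> S \<epsilon>' T. is_hopf_brace m u \<Delta> \<epsilon> S \<Delta>' \<epsilon>' T)"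

definition left_comodule_algebra ::
  "('h \<Rightarrow> 'h \<Rightarrow> ('h \<Rightarrow>\<^sub>0 'k::field)) \<Rightarrow> ('h \<Rightarrow>\<^sub>0 'k) \<Rightarrow> ('h \<Rightarrow> ('h \<times> 'h \<Rightarrow>\<^sub>0 'k)) \<Rightarrow> ('h \<Rightarrow> 'k)
   \<Rightarrow> ('a \<Rightarrow> 'a \<Rightarrow> ('a \<Rightarrow>\<^sub>0 'k)) \<Rightarrow> ('a \<Rightarrow>\<^sub>0 'k) \<Rightarrow> ('a \<Rightarrow> ('h \<times> 'a \<Rightarrow>\<^sub>0 'k)) \<Rightarrow> bool" where
  "left_comodule_algebra mH uH \<Delta>H \<epsilon>H mA uA \<rho> \<longleftrightarrow>
     (\<forall>a. lin (\<lambda>(h, x). lin (\<lambda>(h1, h2). bv (h1, h2, x)) (\<Delta>H h)) (\<rho> a)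
        = lin (\<lambda>(h, x). lin (\<lambda>(g, y). bv (h, g, y)) (\<rho> x)) (\<rho> a)) \<and>
     (\<forall>a. lin (\<lambda>(h, x). smult (\<epsilon>H h) (bv x)) (\<rho> a) = bv a) \<and>
     (\<forall>a b. lin \<rho> (mA a b) = mulv (tmul mH mA) (\<rho> a) (\<rho> b)) \<and>
     lin \<rho> uA = tens uH uA"

definition right_comodule_algebra ::
  "('h \<Rightarrow> 'h \<Rightarrow> ('h \<Rightarrow>\<^sub>0 'k::field)) \<Rightarrow> ('h \<Rightarrow>\<^sub>0 'k)
   \<Rightarrow> ('a \<Rightarrow> 'a \<Rightarrow> ('a \<Rightarrow>\<^sub>0 'k)) \<Rightarrow> ('a \<Rightarrow>\<^sub>0 'k) \<Rightarrow> ('a \<Rightarrow> ('a \<times> 'a \<Rightarrow>\<^sub>0 'k)) \<Rightarrow> ('a \<Rightarrow> 'k)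
   \<Rightarrow> ('h \<Rightarrow> ('h \<times> 'a \<Rightarrow>\<^sub>0 'k)) \<Rightarrow> bool" where
  "right_comodule_algebra mH uH mA uA \<Delta>A \<epsilon>A \<phi> \<longleftrightarrow>
     (\<forall>h. lin (\<lambda>(g, x). lin (\<lambda>(g0, g1). bv (g0, g1, x)) (\<phi> g)) (\<phi> h)
        = lin (\<lambda>(g, x). lin (\<lambda>(x1, x2). bv (g, x1, x2)) (\<Delta>A x)) (\<phi> h)) \<and>
     (\<forall>h. lin (\<lambda>(g, x). smult (\<epsilon>A x) (bv g)) (\<phi> h) = bv h) \<and>
     (\<forall>h g. lin \<phi> (mH h g) = mulv (tmul mH mA) (\<phi> h) (\<phi> g)) \<and>
     lin \<phi> uH = tens uH uA"

definition left_comodule_bialgebra ::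
  "('h \<Rightarrow> 'h \<Rightarrow> ('h \<Rightarrow>\<^sub>0 'k::field)) \<Rightarrow> ('h \<Rightarrow>\<^sub>0 'k) \<Rightarrow> ('h \<Rightarrow> ('h \<times> 'h \<Rightarrow>\<^sub>0 'k)) \<Rightarrow> ('h \<Rightarrow> 'k)
   \<Rightarrow> ('a \<Rightarrow> 'a \<Rightarrow> ('a \<Rightarrow>\<^sub>0 'k)) \<Rightarrow> ('a \<Rightarrow>\<^sub>0 'k) \<Rightarrow> ('a \<Rightarrow> ('a \<times> 'a \<Rightarrow>\<^sub>0 'k)) \<Rightarrow> ('a \<Rightarrow> 'k)
   \<Rightarrow> ('a \<Rightarrow> ('h \<times> 'a \<Rightarrow>\<^sub>0 'k)) \<Rightarrow> bool" where
  "left_comodule_bialgebra mH uH \<Delta>H \<epsilon>H mA uA \<Delta>A \<epsilon>A \<rho> \<longleftrightarrow>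
     left_comodule_algebra mH uH \<Delta>H \<epsilon>H mA uA \<rho> \<and>
     (\<forall>a. lin (\<lambda>(h, x). lin (\<lambda>(x1, x2). bv (h, x1, x2)) (\<Delta>A x)) (\<rho> a)
        = lin (\<lambda>(a1, a2). lin (\<lambda>(h1, x1). lin (\<lambda>(h2, x2).
             tens (mulv mH (bv h1) (bv h2)) (bv (x1, x2))) (\<rho> a2)) (\<rho> a1)) (\<Delta>A a)) \<and>
     (\<forall>a. lin (\<lambda>(h, x). smult (\<epsilon>A x) (bv h)) (\<rho> a) = smult (\<epsilon>A a) uH)"

definition hopf_matched_pair ::
  "('a \<Rightarrow> 'a \<Rightarrow> ('a \<Rightarrow>\<^sub>0 'k::field)) \<Rightarrow> ('a \<Rightarrow>\<^sub>0 'k) \<Rightarrow> ('a \<Rightarrow> ('a \<times> 'a \<Rightarrow>\<^sub>0 'k)) \<Rightarrow> ('a \<Rightarrow> 'k)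
   \<Rightarrow> ('a \<Rightarrow> ('a \<Rightarrow>\<^sub>0 'k))
   \<Rightarrow> ('h \<Rightarrow> 'h \<Rightarrow> ('h \<Rightarrow>\<^sub>0 'k)) \<Rightarrow> ('h \<Rightarrow>\<^sub>0 'k) \<Rightarrow> ('h \<Rightarrow> ('h \<times> 'h \<Rightarrow>\<^sub>0 'k)) \<Rightarrow> ('h \<Rightarrow> 'k)
   \<Rightarrow> ('h \<Rightarrow> ('h \<Rightarrow>\<^sub>0 'k))
   \<Rightarrow> ('a \<Rightarrow> ('h \<times> 'a \<Rightarrow>\<^sub>0 'k)) \<Rightarrow> ('h \<Rightarrow> ('h \<times> 'a \<Rightarrow>\<^sub>0 'k)) \<Rightarrow> bool" where
  "hopf_matched_pair mA uA \<Delta>A \<epsilon>A SA mH uH \<Delta>H \<epsilon>H SH \<rho> \<phi> \<longleftrightarrow>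
     is_hopf_algebra mA uA \<Delta>A \<epsilon>A SA \<and> is_hopf_algebra mH uH \<Delta>H \<epsilon>H SH \<and>
     left_comodule_algebra mH uH \<Delta>H \<epsilon>H mA uA \<rho> \<and>
     right_comodule_algebra mH uH mA uA \<Delta>A \<epsilon>A \<phi> \<and>
     \<comment> \<open>HM1\<close>
     (\<forall>a. lin (\<lambda>(h, x). smult (\<epsilon>A x) (bv h)) (\<rho> a) = smult (\<epsilon>A a) uH) \<and>
     (\<forall>h. lin (\<lambda>(g, x). smult (\<epsilon>H g) (bv x)) (\<phi> h) = smult (\<epsilon>H h) uA) \<and>
     \<comment> \<open>HM2\<close>
     (\<forall>a. lin (\<lambda>(h, x). lin (\<lambda>(x1, x2). bv (h, x1, x2)) (\<Delta>A x)) (\<rho> a)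
        = lin (\<lambda>(a1, a2). lin (\<lambda>(g1, b1). lin (\<lambda>(g2, b2). lin (\<lambda>(g20, g21).
             tens (mH g1 g20) (tens (mA b1 g21) (bv b2)))
           (\<phi> g2)) (\<rho> a2)) (\<rho> a1)) (\<Delta>A a)) \<and>
     \<comment> \<open>HM3\<close>
     (\<forall>h. lin (\<lambda>(g, x). lin (\<lambda>(g1, g2). bv (g1, g2, x)) (\<Delta>H g)) (\<phi> h)
        = lin (\<lambda>(h1, h2). lin (\<lambda>(h10, h11). lin (\<lambda>(f, y). lin (\<lambda>(h20, h21).
             tens (bv h10) (tens (mH f h20) (mA y h21)))
           (\<phi> h2)) (\<rho> h11)) (\<phi> h1)) (\<Delta>H h)) \<and>
     \<comment> \<open>HM4\<close>
     (\<forall>a h. lin (\<lambda>(g, y). lin (\<lambda>(f, x). tens (mH g f) (mA y x)) (\<rho> a)) (\<phi> h)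
        = lin (\<lambda>(f, x). lin (\<lambda>(g, y). tens (mH f g) (mA x y)) (\<phi> h)) (\<rho> a))"

text \<open>bicrossed coproduct: a_1 \<otimes> a_{2(-1)}h_{1[0]} \<otimes> a_{2(0)}h_{1[1]} \<otimes> h_2\<close>
definition bicrossed_coproduct ::
  "('a \<Rightarrow> 'a \<Rightarrow> ('a \<Rightarrow>\<^sub>0 'k::field)) \<Rightarrow> ('a \<Rightarrow> ('a \<times> 'a \<Rightarrow>\<^sub>0 'k))
   \<Rightarrow> ('h \<Rightarrow> 'h \<Rightarrow> ('h \<Rightarrow>\<^sub>0 'k)) \<Rightarrow> ('h \<Rightarrow> ('h \<times> 'h \<Rightarrow>\<^sub>0 'k))
   \<Rightarrow> ('a \<Rightarrow> ('h \<times> 'a \<Rightarrow>\<^sub>0 'k)) \<Rightarrow> ('h \<Rightarrow> ('h \<times> 'a \<Rightarrow>\<^sub>0 'k))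
   \<Rightarrow> 'a \<times> 'h \<Rightarrow> (('a \<times> 'h) \<times> ('a \<times> 'h) \<Rightarrow>\<^sub>0 'k)" where
  "bicrossed_coproduct mA \<Delta>A mH \<Delta>H \<rho> \<phi> p =
     lin (\<lambda>(a1, a2). lin (\<lambda>(g, b). lin (\<lambda>(h1, h2). lin (\<lambda>(h10, h11).
        tens (tens (bv a1) (mH g h10)) (tens (mA b h11) (bv h2)))
      (\<phi> h1)) (\<Delta>H (snd p))) (\<rho> a2)) (\<Delta>A (fst p))"

text \<open>smash coproduct: a_1 \<otimes> a_{2(-1)'}h_{1'} \<otimes> a_{2(0)'} \<otimes> h_{2'}\<close>
definition smash_coproduct ::
  "('a \<Rightarrow> ('a \<times> 'a \<Rightarrow>\<^sub>0 'k::field))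
   \<Rightarrow> ('h \<Rightarrow> 'h \<Rightarrow> ('h \<Rightarrow>\<^sub>0 'k)) \<Rightarrow> ('h \<Rightarrow> ('h \<times> 'h \<Rightarrow>\<^sub>0 'k))
   \<Rightarrow> ('a \<Rightarrow> ('h \<times> 'a \<Rightarrow>\<^sub>0 'k))
   \<Rightarrow> 'a \<times> 'h \<Rightarrow> (('a \<times> 'h) \<times> ('a \<times> 'h) \<Rightarrow>\<^sub>0 'k)" where
  "smash_coproduct \<Delta>A mH \<Delta>H' \<rho>' p =
     lin (\<lambda>(a1, a2). lin (\<lambda>(g, b). lin (\<lambda>(h1, h2).
        tens (tens (bv a1) (mH g h1)) (tens (bv b) (bv h2)))
      (\<Delta>H' (snd p))) (\<rho>' a2)) (\<Delta>A (fst p))"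

end

theory Submission
  imports Defs
begin

text \<open>
  Both coproducts on A \<otimes> H are twisted tensor coproducts a \<otimes> h \<mapsto> a1 \<otimes> P(a2 \<otimes> h1) \<otimes> h2,
  with P(a \<otimes> h) = \<rho>(a)\<phi>(h) for the bicrossed and P(a \<otimes> h) = \<rho>'(a)(h \<otimes> 1) for the smash
  coproduct, and the axioms of a twisting map make each of them a Hopf algebra on the tensor
  product algebra.  Since antipodes are unique, the brace property is then one identity, with the
  antipode of the bicrossed coproduct.  At a \<otimes> h both of its sides are obtained from an element of
  H \<otimes> H \<otimes> A \<otimes> H depending only on h and on b \<in> A, through a map built from \<Delta>A that has a left
  inverse; so it amounts to an identity core_lhs b h = core_rhs b h.  Putting h = 1, resp. b = 1,
  in it gives the two conditions.  Conversely, the two conditions, the brace axiom of H, the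
  multiplicativity of \<Delta>, \<Delta>', \<rho>' and the anti-multiplicativity of S give the core identity, the
  last step using that H is commutative.\<close>

section \<open>Linear maps between free vector spaces\<close>

lemma lookup_smult [simp]: "Poly_Mapping.lookup (smult c v) x = c * Poly_Mapping.lookup v x"
  unfolding smult_def by (simp add: Poly_Mapping.map.rep_eq when_def)

lemma smult_smult: "smult c (smult d v) = smult (c * d) v"
  by (rule poly_mapping_eqI) simp

lemma smult_one [simp]: "smult 1 v = v"
  by (rule poly_mapping_eqI) simp

lemma lookup_bv: "Poly_Mapping.lookup (bv x :: 'b \<Rightarrow>\<^sub>0 'k::field) y = (if x = y then 1 else 0)"
  unfolding bv_def by (simp add: lookup_single)

lemma keys_bv [simp]: "Poly_Mapping.keys (bv x :: 'b \<Rightarrow>\<^sub>0 'k::field) = {x}"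
  unfolding bv_def by simp

lemma lookup_lin_superset:
  assumes "finite X" "Poly_Mapping.keys v \<subseteq> X"
  shows "Poly_Mapping.lookup (lin f v) t
    = (\<Sum>x\<in>X. Poly_Mapping.lookup v x * Poly_Mapping.lookup (f x) t)"
proof -
  have "Poly_Mapping.lookup (lin f v) t
      = (\<Sum>x\<in>Poly_Mapping.keys v. Poly_Mapping.lookup v x * Poly_Mapping.lookup (f x) t)"
    unfolding lin_def by (simp add: lookup_sum)
  also have "\<dots> = (\<Sum>x\<in>X. Poly_Mapping.lookup v x * Poly_Mapping.lookup (f x) t)"
    by (rule sum.mono_neutral_left) (use assms in \<open>auto simp: in_keys_iff\<close>)
  finally show ?thesis .
qed

lemma lookup_lin: "Poly_Mapping.lookup (lin f v) t
    = (\<Sum>x\<in>Poly_Mapping.keys v. Poly_Mapping.lookup v x * Poly_Mapping.lookup (f x) t)"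
  by (rule lookup_lin_superset) auto

lemma lin_bv [simp]: "lin f (bv x) = f x"
  by (rule poly_mapping_eqI) (simp add: lookup_lin lookup_bv)

lemma lin_bv_id [simp]: "lin bv v = v"
  by (rule poly_mapping_eqI) (simp add: lookup_lin lookup_bv in_keys_iff if_distrib cong: if_cong)

lemma lin_add: "lin f (u + v) = lin f u + lin f v"
proof (rule poly_mapping_eqI)
  fix t
  let ?X = "Poly_Mapping.keys u \<union> Poly_Mapping.keys v"
  have "Poly_Mapping.keys (u + v) \<subseteq> ?X" by (rule keys_add)
  then show "Poly_Mapping.lookup (lin f (u + v)) t = Poly_Mapping.lookup (lin f u + lin f v) t"
    by (simp add: lookup_add lookup_lin_superset[of ?X] sum.distrib algebra_simps)
qed

lemma lin_zero [simp]: "lin f 0 = 0"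
  unfolding lin_def by simp

lemma lin_smult: "lin f (smult c v) = smult c (lin f v)"
proof (rule poly_mapping_eqI)
  fix t
  have "Poly_Mapping.keys (smult c v) \<subseteq> Poly_Mapping.keys v"
    by (auto simp: in_keys_iff)
  from lookup_lin_superset[OF finite_keys this, of f t]
  show "Poly_Mapping.lookup (lin f (smult c v)) t = Poly_Mapping.lookup (smult c (lin f v)) t"
    by (simp add: lookup_lin sum_distrib_left algebra_simps)
qed

lemma lin_sum: "lin f (sum g X) = (\<Sum>x\<in>X. lin f (g x))"
  by (induction X rule: infinite_finite_induct) (auto simp: lin_add)

lemma lin_fun_smult: "lin (\<lambda>x. smult c (f x)) v = smult c (lin f v)"
  by (rule poly_mapping_eqI) (simp add: lookup_lin sum_distrib_left algebra_simps)

lemma lin_smult_const: "lin (\<lambda>x. smult (g x) w) v = smult (linf g v) w"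
  by (rule poly_mapping_eqI) (simp add: lookup_lin linf_def sum_distrib_left ac_simps)

lemma lin_assoc: "lin f (lin g v) = lin (\<lambda>x. lin f (g x)) v"
  by (simp add: lin_def[of g v] lin_sum lin_smult lin_def[of "\<lambda>x. lin f (g x)"])

lemma lin_swap: "lin (\<lambda>x. lin (\<lambda>y. F x y) w) v = lin (\<lambda>y. lin (\<lambda>x. F x y) v) w"
  by (rule poly_mapping_eqI)
     (simp add: lookup_lin sum_distrib_left sum_distrib_right algebra_simps
         sum.swap[of _ "Poly_Mapping.keys v"])

lemma lin_swap_split:
  "lin (\<lambda>(x1, x2). lin (\<lambda>(y1, y2). F x1 x2 y1 y2) w) v
   = lin (\<lambda>(y1, y2). lin (\<lambda>(x1, x2). F x1 x2 y1 y2) v) w"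
  unfolding split_def by (rule lin_swap)

lemma lin_swap_split_outer:
  "lin (\<lambda>(x1, x2). lin (\<lambda>y. F x1 x2 y) w) v = lin (\<lambda>y. lin (\<lambda>(x1, x2). F x1 x2 y) v) w"
  unfolding split_def by (rule lin_swap)

lemma lin_swap_split_inner:
  "lin (\<lambda>x. lin (\<lambda>(y1, y2). F x y1 y2) w) v = lin (\<lambda>(y1, y2). lin (\<lambda>x. F x y1 y2) v) w"
  unfolding split_def by (rule lin_swap)

lemma linf_bv [simp]: "linf f (bv x) = f x"
  by (simp add: linf_def lookup_bv)

lemma linf_superset:
  assumes "finite X" "Poly_Mapping.keys v \<subseteq> X"
  shows "linf f v = (\<Sum>x\<in>X. Poly_Mapping.lookup v x * f x)"
  unfolding linf_def by (rule sum.mono_neutral_left) (use assms in \<open>auto simp: in_keys_iff\<close>)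

lemma keys_lin: "Poly_Mapping.keys (lin g v) \<subseteq> (\<Union>x\<in>Poly_Mapping.keys v. Poly_Mapping.keys (g x))"
proof
  fix y assume "y \<in> Poly_Mapping.keys (lin g v)"
  then have "(\<Sum>x\<in>Poly_Mapping.keys v. Poly_Mapping.lookup v x * Poly_Mapping.lookup (g x) y) \<noteq> 0"
    by (simp add: in_keys_iff lookup_lin)
  then obtain x where "x \<in> Poly_Mapping.keys v" "Poly_Mapping.lookup (g x) y \<noteq> 0"
    by (metis (no_types, lifting) mult_zero_right sum.neutral)
  then show "y \<in> (\<Union>x\<in>Poly_Mapping.keys v. Poly_Mapping.keys (g x))"
    by (auto simp: in_keys_iff)
qed

lemma linf_lin: "linf f (lin g v) = linf (\<lambda>x. linf f (g x)) v"
proof -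
  let ?Y = "\<Union>x\<in>Poly_Mapping.keys v. Poly_Mapping.keys (g x)"
  have fin: "finite ?Y" by simp
  have "linf f (lin g v) = (\<Sum>y\<in>?Y. Poly_Mapping.lookup (lin g v) y * f y)"
    by (rule linf_superset[OF fin keys_lin])
  also have "\<dots> = (\<Sum>x\<in>Poly_Mapping.keys v. Poly_Mapping.lookup v x
      * (\<Sum>y\<in>?Y. Poly_Mapping.lookup (g x) y * f y))"
    by (simp add: lookup_lin sum_distrib_left sum_distrib_right mult.assoc sum.swap[of _ ?Y])
  also have "\<dots> = (\<Sum>x\<in>Poly_Mapping.keys v. Poly_Mapping.lookup v x * linf f (g x))"
    by (intro sum.cong refl arg_cong[where f="\<lambda>s. _ * s"] linf_superset[symmetric, OF fin]) auto
  finally show ?thesis by (simp add: linf_def)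
qed

lemma linf_smult: "linf f (smult c v) = c * linf f v"
proof -
  have "Poly_Mapping.keys (smult c v) \<subseteq> Poly_Mapping.keys v" by (auto simp: in_keys_iff)
  then have "linf f (smult c v)
      = (\<Sum>x\<in>Poly_Mapping.keys v. Poly_Mapping.lookup (smult c v) x * f x)"
    by (rule linf_superset[OF finite_keys])
  then show ?thesis by (simp add: linf_def sum_distrib_left ac_simps)
qed

lemma linf_fun_mult: "linf (\<lambda>x. c * f x) v = c * linf f v"
  by (simp add: linf_def sum_distrib_left ac_simps)

lemma linf_fun_mult_right: "linf (\<lambda>x. f x * c) v = linf f v * c"
  by (simp add: linf_def sum_distrib_left sum_distrib_right ac_simps)

lemma lin_case_prod: "lin F (case_prod G x) = case_prod (\<lambda>a b. lin F (G a b)) x"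
  by (simp add: split_def)

lemma lin_assoc_split: "lin (\<lambda>x. lin F (case_prod G x)) v = lin (\<lambda>(a, b). lin F (G a b)) v"
  by (simp add: split_def)

lemma lin_fun_smult_split: "lin (\<lambda>(a, b). smult c (F a b)) v = smult c (lin (case_prod F) v)"
  by (simp add: split_def lin_fun_smult)

lemma lin_pull_smult:
  "lin (\<lambda>x. smult (F x) (smult c (G x))) v = smult c (lin (\<lambda>x. smult (F x) (G x)) v)"
  by (simp add: smult_smult lin_fun_smult[symmetric] mult.commute)

lemma lin_pull_smult_split:
  "lin (\<lambda>(x, y). smult (F x y) (smult c (G x y))) v
   = smult c (lin (\<lambda>(x, y). smult (F x y) (G x y)) v)"
  by (simp add: split_def lin_pull_smult)

lemma lin_cong_split:
  assumes "\<And>a b. F a b = G a b"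
  shows "lin (case_prod F) v = lin (case_prod G) v"
  using assms by (metis ext)

lemma mulv_bv: "mulv m (bv x) (bv y) = m x y"
  by (simp add: mulv_def)

lemma mulv_lin_left: "mulv m (lin F U) V = lin (\<lambda>x. mulv m (F x) V) U"
  by (simp add: mulv_def lin_assoc)

lemma mulv_lin_right: "mulv m U (lin G V) = lin (\<lambda>x. mulv m U (G x)) V"
  by (simp add: mulv_def lin_assoc lin_swap[of _ V])

lemma mulv_bv_right: "mulv m U (bv y) = lin (\<lambda>x. m x y) U"
  by (simp add: mulv_def)

lemma mulv_smult_left: "mulv m (smult c X) Y = smult c (mulv m X Y)"
  by (simp add: mulv_def lin_smult)

lemma mulv_smult_right: "mulv m X (smult c Y) = smult c (mulv m X Y)"
  by (simp add: mulv_def lin_smult lin_fun_smult)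

lemma tens_lin_left: "tens (lin F U) V = lin (\<lambda>x. tens (F x) V) U"
  by (simp add: tens_def lin_assoc)

lemma tens_lin_right: "tens U (lin G V) = lin (\<lambda>y. tens U (G y)) V"
  by (simp add: tens_def lin_assoc lin_swap[of _ V])

lemma bv_pair: "bv (x, y) = tens (bv x) (bv y)"
  by (simp add: tens_def)

lemma tmul_pair: "tmul m1 m2 (a1, a2) (b1, b2) = tens (m1 a1 b1) (m2 a2 b2)"
  by (simp add: tmul_def)

lemma mulv_tmul:
  "mulv (tmul m1 m2) U V = lin (\<lambda>(a1, a2). lin (\<lambda>(b1, b2). tens (m1 a1 b1) (m2 a2 b2)) V) U"
  unfolding mulv_def tmul_def by (simp add: case_prod_beta')

lemma mulv_tmul_tens:
  "mulv (tmul m1 m2) (tens U1 U2) (tens V1 V2) = tens (mulv m1 U1 V1) (mulv m2 U2 V2)"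
proof -
  have "mulv (tmul m1 m2) (tens U1 U2) (tens V1 V2)
      = lin (\<lambda>a1. lin (\<lambda>b1. lin (\<lambda>a2. lin (\<lambda>b2. tens (m1 a1 b1) (m2 a2 b2)) V2) U2) V1) U1"
    by (simp add: mulv_tmul tens_def lin_assoc lin_swap[of _ V1 U2])
  also have "\<dots> = tens (mulv m1 U1 V1) (mulv m2 U2 V2)"
    by (simp only: tens_lin_right[symmetric] tens_lin_left[symmetric] mulv_def)
  finally show ?thesis .
qed

lemmas lin_expand = lin_pull_smult lin_pull_smult_split lin_assoc_split lin_assoc lin_bv
  mulv_tmul tmul_pair tens_def mulv_def lin_fun_smult lin_fun_smult_split smult_smult[symmetric]

lemma algebra_mulv_assoc:
  assumes "is_algebra m u"
  shows "mulv m (mulv m x y) z = mulv m x (mulv m y z)"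
proof -
  have "mulv m (m a b) (bv c) = mulv m (bv a) (m b c)" for a b c
    using assms by (simp add: is_algebra_def)
  then have "lin (\<lambda>a. lin (\<lambda>b. lin (\<lambda>c. mulv m (m a b) (bv c)) z) y) x
      = lin (\<lambda>a. lin (\<lambda>b. lin (\<lambda>c. mulv m (bv a) (m b c)) z) y) x"
    by simp
  then show ?thesis
    by (simp add: mulv_def lin_assoc lin_swap[of _ z])
qed

lemma algebra_mulv_lunit:
  assumes "is_algebra m u"
  shows "mulv m u v = v"
proof -
  have "mulv m u v = lin (\<lambda>x. mulv m u (bv x)) v"
    by (simp add: mulv_lin_right[symmetric])
  then show ?thesis using assms by (simp add: is_algebra_def)
qed

lemma algebra_mulv_runit:
  assumes "is_algebra m u"
  shows "mulv m v u = v"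
proof -
  have "mulv m v u = lin (\<lambda>x. mulv m (bv x) u) v"
    by (simp add: mulv_lin_left[symmetric])
  then show ?thesis using assms by (simp add: is_algebra_def)
qed

lemma is_algebra_tmul:
  assumes A: "is_algebra m1 u1" and B: "is_algebra m2 u2"
  shows "is_algebra (tmul m1 m2) (tens u1 u2)"
  unfolding is_algebra_def
proof (intro conjI allI)
  have bv_tens: "bv p = tens (bv (fst p)) (bv (snd p))" for p :: "'a \<times> 'c"
    by (simp add: tens_def)
  fix x y z :: "'a \<times> 'c"
  show "mulv (tmul m1 m2) (tmul m1 m2 x y) (bv z) = mulv (tmul m1 m2) (bv x) (tmul m1 m2 y z)"
    by (simp add: tmul_def bv_tens[of x] bv_tens[of z] mulv_tmul_tens)
       (simp add: mulv_bv[symmetric] algebra_mulv_assoc[OF A] algebra_mulv_assoc[OF B])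
  show "mulv (tmul m1 m2) (tens u1 u2) (bv x) = bv x"
    by (simp add: bv_tens[of x] mulv_tmul_tens algebra_mulv_lunit[OF A] algebra_mulv_lunit[OF B])
  show "mulv (tmul m1 m2) (bv x) (tens u1 u2) = bv x"
    by (simp add: bv_tens[of x] mulv_tmul_tens algebra_mulv_runit[OF A] algebra_mulv_runit[OF B])
qed

section \<open>Hopf algebras\<close>

locale hopf =
  fixes m :: "'b \<Rightarrow> 'b \<Rightarrow> ('b \<Rightarrow>\<^sub>0 'k::field)" and u :: "'b \<Rightarrow>\<^sub>0 'k"
    and D :: "'b \<Rightarrow> ('b \<times> 'b \<Rightarrow>\<^sub>0 'k)" and e :: "'b \<Rightarrow> 'k" and S :: "'b \<Rightarrow> ('b \<Rightarrow>\<^sub>0 'k)"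
  assumes hopf_algebra: "is_hopf_algebra m u D e S"
begin

lemma algebra: "is_algebra m u"
  using hopf_algebra by (simp add: is_hopf_algebra_def is_bialgebra_def)

lemma coalgebra: "is_coalgebra D e"
  using hopf_algebra by (simp add: is_hopf_algebra_def is_bialgebra_def)

lemma assoc_bv: "mulv m (m x y) (bv z) = mulv m (bv x) (m y z)"
  using algebra by (simp add: is_algebra_def)
lemma lunit_bv: "mulv m u (bv x) = bv x"
  using algebra by (simp add: is_algebra_def)
lemma runit_bv: "mulv m (bv x) u = bv x"
  using algebra by (simp add: is_algebra_def)
lemma coassoc_bv: "lin (\<lambda>(y, z). lin (\<lambda>(y1, y2). bv (y1, y2, z)) (D y)) (D x)
    = lin (\<lambda>(y, z). lin (\<lambda>(z1, z2). bv (y, z1, z2)) (D z)) (D x)"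
  using coalgebra by (simp add: is_coalgebra_def)
lemma lcounit_bv: "lin (\<lambda>(y, z). smult (e y) (bv z)) (D x) = bv x"
  using coalgebra by (simp add: is_coalgebra_def)
lemma rcounit_bv: "lin (\<lambda>(y, z). smult (e z) (bv y)) (D x) = bv x"
  using coalgebra by (simp add: is_coalgebra_def)
lemma comult_mult_bv: "lin D (m x y) = mulv (tmul m m) (D x) (D y)"
  using hopf_algebra by (simp add: is_hopf_algebra_def is_bialgebra_def)
lemma comult_unit_bv: "lin D u = tens u u"
  using hopf_algebra by (simp add: is_hopf_algebra_def is_bialgebra_def)
lemma counit_mult: "linf e (m x y) = e x * e y"
  using hopf_algebra by (simp add: is_hopf_algebra_def is_bialgebra_def)
lemma counit_unit: "linf e u = 1"
  using hopf_algebra by (simp add: is_hopf_algebra_def is_bialgebra_def)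
lemma lantipode_bv: "lin (\<lambda>(y, z). mulv m (S y) (bv z)) (D x) = smult (e x) u"
  using hopf_algebra by (simp add: is_hopf_algebra_def)
lemma rantipode_bv: "lin (\<lambda>(y, z). mulv m (bv y) (S z)) (D x) = smult (e x) u"
  using hopf_algebra by (simp add: is_hopf_algebra_def)

lemma mulv_assoc: "mulv m (mulv m X Y) Z = mulv m X (mulv m Y Z)"
  by (rule algebra_mulv_assoc[OF algebra])
lemma mulv_lunit: "mulv m u X = X"
  by (rule algebra_mulv_lunit[OF algebra])
lemma mulv_runit: "mulv m X u = X"
  by (rule algebra_mulv_runit[OF algebra])

text \<open>
  Continuation forms: each axiom with an arbitrary linear map K applied to both sides and pushed
  down to the basis vectors.  In this form the simplifier can use it deep inside nested Sweedler
  sums, whatever the body of the innermost sum.\<close>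

lemma assoc: "lin (\<lambda>p. lin K (m p z)) (m x y) = lin (\<lambda>q. lin K (m x q)) (m y z)"
  using arg_cong[OF assoc_bv, of "lin K"] by (simp add: lin_expand)
lemma lunit: "lin (\<lambda>p. lin K (m p x)) u = K x"
  using arg_cong[OF lunit_bv, of "lin K"] by (simp add: lin_expand)
lemma runit: "lin (\<lambda>p. lin K (m x p)) u = K x"
  using arg_cong[OF runit_bv, of "lin K"] by (simp add: lin_expand)
lemma coassoc: "lin (\<lambda>(y, z). lin (\<lambda>(y1, y2). K y1 y2 z) (D y)) (D x)
    = lin (\<lambda>(y, z). lin (\<lambda>(z1, z2). K y z1 z2) (D z)) (D x)"
  using arg_cong[OF coassoc_bv, of "lin (\<lambda>(a, b, c). K a b c)"]
  by (simp add: lin_expand case_prod_beta')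
lemma lcounit: "lin (\<lambda>(y, z). smult (e y) (K z)) (D x) = K x"
  using arg_cong[OF lcounit_bv, of "lin K"] by (simp add: lin_expand split_def lin_smult)
lemma rcounit: "lin (\<lambda>(y, z). smult (e z) (K y)) (D x) = K x"
  using arg_cong[OF rcounit_bv, of "lin K"] by (simp add: lin_expand split_def lin_smult)
lemma comult_mult: "lin (\<lambda>z. lin K (D z)) (m x y)
    = lin (\<lambda>(x1, x2). lin (\<lambda>(y1, y2). lin (\<lambda>p. lin (\<lambda>q. K (p, q)) (m x2 y2)) (m x1 y1)) (D y)) (D x)"
  using arg_cong[OF comult_mult_bv[unfolded mulv_tmul], of "lin K"]
  by (simp add: lin_assoc tens_def split_def)
lemma comult_unit: "lin (\<lambda>z. lin K (D z)) u = lin (\<lambda>p. lin (\<lambda>q. K (p, q)) u) u"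
  using arg_cong[OF comult_unit_bv, of "lin K"] by (simp add: lin_expand)
lemma counit_mult_smult: "lin (\<lambda>p. smult (e p) W) (m x y) = smult (e x * e y) W"
  by (simp add: lin_smult_const counit_mult)
lemma counit_unit_smult: "lin (\<lambda>p. smult (e p) W) u = W"
  by (simp add: lin_smult_const counit_unit)
lemma lantipode: "lin (\<lambda>(y, z). lin (\<lambda>p. lin K (m p z)) (S y)) (D x) = smult (e x) (lin K u)"
  using arg_cong[OF lantipode_bv, of "lin K"] by (simp add: lin_expand split_def lin_smult)
lemma rantipode: "lin (\<lambda>(y, z). lin (\<lambda>p. lin K (m y p)) (S z)) (D x) = smult (e x) (lin K u)"
  using arg_cong[OF rantipode_bv, of "lin K"] by (simp add: lin_expand split_def lin_smult)

definition conv :: "('b \<Rightarrow> ('b \<Rightarrow>\<^sub>0 'k)) \<Rightarrow> ('b \<Rightarrow> ('b \<Rightarrow>\<^sub>0 'k)) \<Rightarrow> 'b \<Rightarrow> ('b \<Rightarrow>\<^sub>0 'k)" where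
  "conv F G x = lin (\<lambda>(x1, x2). mulv m (F x1) (G x2)) (D x)"

lemma conv_assoc: "conv (conv F G) K x = conv F (conv G K) x"
proof -
  have "conv (conv F G) K x
      = lin (\<lambda>(x1, x2). lin (\<lambda>(y1, y2). mulv m (mulv m (F y1) (G y2)) (K x2)) (D x1)) (D x)"
    by (simp add: conv_def mulv_lin_left split_def)
  also have "\<dots> = lin (\<lambda>(x1, x2). lin (\<lambda>(y1, y2). mulv m (F x1) (mulv m (G y1) (K y2))) (D x2)) (D x)"
    by (simp only: coassoc mulv_assoc)
  also have "\<dots> = conv F (conv G K) x"
    by (simp add: conv_def mulv_lin_right split_def)
  finally show ?thesis .
qed

lemma conv_counit_right: "conv F (\<lambda>x. smult (e x) u) x = F x"
  by (simp add: conv_def mulv_smult_right mulv_runit rcounit)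

lemma conv_counit_left: "conv (\<lambda>x. smult (e x) u) F x = F x"
  by (simp add: conv_def mulv_smult_left mulv_lunit lcounit)

lemma antipode_unique:
  assumes "\<And>x. lin (\<lambda>(y, z). mulv m (S' y) (bv z)) (D x) = smult (e x) u"
  shows "S' x = S x"
proof -
  have "conv (\<lambda>x. bv x) S = (\<lambda>x. smult (e x) u)"
    by (simp add: fun_eq_iff conv_def rantipode_bv)
  moreover have "conv S' (\<lambda>x. bv x) = (\<lambda>x. smult (e x) u)"
    by (simp add: fun_eq_iff conv_def assms)
  ultimately show ?thesis
    using conv_assoc[of S' "\<lambda>x. bv x" S x] by (simp add: conv_counit_left conv_counit_right)
qed

text \<open>Both sides of antipode_antimult are convolution inverses of the multiplication A \<otimes> A \<rightarrow> A.\<close>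

definition conv2 :: "('b \<Rightarrow> 'b \<Rightarrow> ('b \<Rightarrow>\<^sub>0 'k)) \<Rightarrow> ('b \<Rightarrow> 'b \<Rightarrow> ('b \<Rightarrow>\<^sub>0 'k))
    \<Rightarrow> 'b \<Rightarrow> 'b \<Rightarrow> ('b \<Rightarrow>\<^sub>0 'k)" where
  "conv2 F G x y = lin (\<lambda>(x1, x2). lin (\<lambda>(y1, y2). mulv m (F x1 y1) (G x2 y2)) (D y)) (D x)"

lemma conv2_assoc: "conv2 (conv2 F G) K x y = conv2 F (conv2 G K) x y"
proof -
  have "conv2 (conv2 F G) K x y = lin (\<lambda>(x1, x2). lin (\<lambda>(y1, y2). lin (\<lambda>(x11, x12). lin (\<lambda>(y11, y12).
      mulv m (mulv m (F x11 y11) (G x12 y12)) (K x2 y2)) (D y1)) (D x1)) (D y)) (D x)"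
    by (simp add: conv2_def mulv_lin_left split_def)
  also have "\<dots> = lin (\<lambda>(x1, x2). lin (\<lambda>(y1, y2). lin (\<lambda>(x21, x22). lin (\<lambda>(y21, y22).
      mulv m (F x1 y1) (mulv m (G x21 y21) (K x22 y22))) (D y2)) (D x2)) (D y)) (D x)"
    by (simp only: mulv_assoc lin_swap_split[where v="D y"] coassoc)
  also have "\<dots> = conv2 F (conv2 G K) x y"
    by (simp add: conv2_def mulv_lin_right split_def)
  finally show ?thesis .
qed

lemma conv2_counit_right: "conv2 F (\<lambda>x y. smult (e x * e y) u) x y = F x y"
  by (simp add: conv2_def mulv_smult_right mulv_runit smult_smult[symmetric] rcounit
      lin_fun_smult lin_fun_smult_split)

lemma conv2_counit_left: "conv2 (\<lambda>x y. smult (e x * e y) u) F x y = F x y"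
  by (simp add: conv2_def mulv_smult_left mulv_lunit smult_smult[symmetric] lcounit
      lin_fun_smult lin_fun_smult_split)

lemma conv2_antipode_mult: "conv2 (\<lambda>x y. lin S (m x y)) m x y = smult (e x * e y) u"
proof -
  have "conv2 (\<lambda>x y. lin S (m x y)) m x y = lin (\<lambda>(a, b). mulv m (S a) (bv b)) (lin D (m x y))"
    by (simp add: conv2_def comult_mult lin_expand lin_swap[of _ "S _" "m _ _"])
  also have "\<dots> = smult (e x * e y) u"
    by (simp add: lin_assoc lantipode_bv lin_smult_const counit_mult)
  finally show ?thesis .
qed

lemma conv2_mult_antipode_flip: "conv2 m (\<lambda>x y. mulv m (S y) (S x)) x y = smult (e x * e y) u"
proof -
  have "conv2 m (\<lambda>x y. mulv m (S y) (S x)) x y = lin (\<lambda>(x1, x2). mulv m (bv x1)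
      (mulv m (lin (\<lambda>(y1, y2). mulv m (bv y1) (S y2)) (D y)) (S x2))) (D x)"
    by (simp add: conv2_def mulv_bv[of m, symmetric] mulv_assoc mulv_lin_left mulv_lin_right
        split_def)
  also have "\<dots> = smult (e x * e y) u"
    by (simp add: rantipode_bv mulv_smult_left mulv_smult_right mulv_lunit lin_fun_smult_split
        smult_smult mult.commute)
  finally show ?thesis .
qed

lemma antipode_antimult: "lin S (m x y) = mulv m (S y) (S x)"
proof -
  let ?E = "\<lambda>x y. smult (e x * e y) u"
  have "conv2 (\<lambda>x y. lin S (m x y)) m = ?E" and "conv2 m (\<lambda>x y. mulv m (S y) (S x)) = ?E"
    by (simp_all add: fun_eq_iff conv2_antipode_mult conv2_mult_antipode_flip)
  then show ?thesis
    using conv2_assoc[of "\<lambda>x y. lin S (m x y)" m "\<lambda>x y. mulv m (S y) (S x)" x y]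
    by (simp add: conv2_counit_left conv2_counit_right)
qed

lemma antipode_antimult_cont:
  "lin (\<lambda>z. lin K (S z)) (m x y) = lin (\<lambda>q. lin (\<lambda>p. lin K (m q p)) (S x)) (S y)"
  using arg_cong[OF antipode_antimult, of "lin K"] by (simp add: lin_assoc mulv_def)

end

lemma counit_unique:
  assumes "is_coalgebra D e" "is_coalgebra D e'"
  shows "e x = e' x"
proof -
  have l: "lin (\<lambda>(y, z). smult (e y) (bv z)) (D x) = bv x"
    using assms(1) by (simp add: is_coalgebra_def)
  have r: "lin (\<lambda>(y, z). smult (e' z) (bv y)) (D x) = bv x"
    using assms(2) by (simp add: is_coalgebra_def)
  have "e x = linf (\<lambda>(y, z). e y * e' z) (D x)"
    using arg_cong[OF r, of "linf e"] by (simp add: linf_lin split_def linf_smult mult.commute)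
  also have "\<dots> = e' x"
    using arg_cong[OF l, of "linf e'"] by (simp add: linf_lin split_def linf_smult)
  finally show ?thesis .
qed

text \<open>Counit and antipode are unique, so only the antipode of the first Hopf structure matters.\<close>
lemma hopf_brace_coproducts_iff:
  assumes hopf1: "is_hopf_algebra m u D e S" and hopf2: "is_hopf_algebra m u D' e' T"
  shows "hopf_brace_coproducts m u D D' \<longleftrightarrow>
    (\<forall>h. lin (\<lambda>(x, y). lin (\<lambda>(y1, y2). bv (x, y1, y2)) (D y)) (D' h)
       = lin (\<lambda>(x, y). lin (\<lambda>(x1, x2). lin (\<lambda>(x11, x12). lin (\<lambda>(y1, y2).
           tens (mulv m (mulv m (bv x11) (S x2)) (bv y1)) (bv (x12, y2)))
         (D' y)) (D' x1)) (D x)) (D h))"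
    (is "_ \<longleftrightarrow> ?brace_identity")
proof
  assume "hopf_brace_coproducts m u D D'"
  then obtain e1 S1 e2 T2 where brace: "is_hopf_brace m u D e1 S1 D' e2 T2"
    unfolding hopf_brace_coproducts_def by blast
  then have hopf1': "is_hopf_algebra m u D e1 S1"
    by (simp add: is_hopf_brace_def)
  have "e1 x = e x" for x
    using counit_unique[of D e1 e] hopf1 hopf1' by (simp add: is_hopf_algebra_def is_bialgebra_def)
  then have "S1 x = S x" for x
    using hopf.antipode_unique[OF hopf.intro[OF hopf1]] hopf1' by (simp add: is_hopf_algebra_def)
  then show ?brace_identity using brace by (simp add: is_hopf_brace_def)
next
  assume ?brace_identity
  then have "is_hopf_brace m u D e S D' e' T"
    using hopf1 hopf2 by (simp add: is_hopf_brace_def)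
  then show "hopf_brace_coproducts m u D D'"
    unfolding hopf_brace_coproducts_def by blast
qed

locale left_comod =
  fixes mH :: "'h \<Rightarrow> 'h \<Rightarrow> ('h \<Rightarrow>\<^sub>0 'k::field)" and uH :: "'h \<Rightarrow>\<^sub>0 'k"
    and DH :: "'h \<Rightarrow> ('h \<times> 'h \<Rightarrow>\<^sub>0 'k)" and eH :: "'h \<Rightarrow> 'k"
    and mA :: "'a \<Rightarrow> 'a \<Rightarrow> ('a \<Rightarrow>\<^sub>0 'k)" and uA :: "'a \<Rightarrow>\<^sub>0 'k"
    and r :: "'a \<Rightarrow> ('h \<times> 'a \<Rightarrow>\<^sub>0 'k)"
  assumes left_comodule_algebra: "left_comodule_algebra mH uH DH eH mA uA r"
begin

lemma coassoc_bv: "lin (\<lambda>(h, x). lin (\<lambda>(h1, h2). bv (h1, h2, x)) (DH h)) (r a)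
    = lin (\<lambda>(h, x). lin (\<lambda>(g, y). bv (h, g, y)) (r x)) (r a)"
  using left_comodule_algebra by (simp add: left_comodule_algebra_def)
lemma counit_bv: "lin (\<lambda>(h, x). smult (eH h) (bv x)) (r a) = bv a"
  using left_comodule_algebra by (simp add: left_comodule_algebra_def)
lemma mult_bv: "lin r (mA a b) = mulv (tmul mH mA) (r a) (r b)"
  using left_comodule_algebra by (simp add: left_comodule_algebra_def)
lemma unit_bv: "lin r uA = tens uH uA"
  using left_comodule_algebra by (simp add: left_comodule_algebra_def)

lemma coassoc: "lin (\<lambda>(h, x). lin (\<lambda>(h1, h2). K h1 h2 x) (DH h)) (r a)
    = lin (\<lambda>(h, x). lin (\<lambda>(g, y). K h g y) (r x)) (r a)"
  using arg_cong[OF coassoc_bv, of "lin (\<lambda>(a, b, c). K a b c)"] by (simp add: lin_expand split_def)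
lemma counit: "lin (\<lambda>(h, x). smult (eH h) (K x)) (r a) = K a"
  using arg_cong[OF counit_bv, of "lin K"] by (simp add: lin_expand split_def lin_smult)
lemma mult: "lin (\<lambda>z. lin K (r z)) (mA a b)
    = lin (\<lambda>(h, x). lin (\<lambda>(g, y). lin (\<lambda>p. lin (\<lambda>q. K (p, q)) (mA x y)) (mH h g)) (r b)) (r a)"
  using arg_cong[OF mult_bv[unfolded mulv_tmul], of "lin K"]
  by (simp add: lin_assoc tens_def split_def)
lemma unit: "lin (\<lambda>z. lin K (r z)) uA = lin (\<lambda>p. lin (\<lambda>q. K (p, q)) uA) uH"
  using arg_cong[OF unit_bv, of "lin K"] by (simp add: lin_expand)

end

locale right_comod =
  fixes mH :: "'h \<Rightarrow> 'h \<Rightarrow> ('h \<Rightarrow>\<^sub>0 'k::field)" and uH :: "'h \<Rightarrow>\<^sub>0 'k"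
    and mA :: "'a \<Rightarrow> 'a \<Rightarrow> ('a \<Rightarrow>\<^sub>0 'k)" and uA :: "'a \<Rightarrow>\<^sub>0 'k"
    and DA :: "'a \<Rightarrow> ('a \<times> 'a \<Rightarrow>\<^sub>0 'k)" and eA :: "'a \<Rightarrow> 'k"
    and f :: "'h \<Rightarrow> ('h \<times> 'a \<Rightarrow>\<^sub>0 'k)"
  assumes right_comodule_algebra: "right_comodule_algebra mH uH mA uA DA eA f"
begin

lemma coassoc_bv: "lin (\<lambda>(g, x). lin (\<lambda>(g0, g1). bv (g0, g1, x)) (f g)) (f h)
    = lin (\<lambda>(g, x). lin (\<lambda>(x1, x2). bv (g, x1, x2)) (DA x)) (f h)"
  using right_comodule_algebra by (simp add: right_comodule_algebra_def)
lemma counit_bv: "lin (\<lambda>(g, x). smult (eA x) (bv g)) (f h) = bv h"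
  using right_comodule_algebra by (simp add: right_comodule_algebra_def)
lemma mult_bv: "lin f (mH h g) = mulv (tmul mH mA) (f h) (f g)"
  using right_comodule_algebra by (simp add: right_comodule_algebra_def)
lemma unit_bv: "lin f uH = tens uH uA"
  using right_comodule_algebra by (simp add: right_comodule_algebra_def)

lemma coassoc: "lin (\<lambda>(g, x). lin (\<lambda>(g0, g1). K g0 g1 x) (f g)) (f h)
    = lin (\<lambda>(g, x). lin (\<lambda>(x1, x2). K g x1 x2) (DA x)) (f h)"
  using arg_cong[OF coassoc_bv, of "lin (\<lambda>(a, b, c). K a b c)"] by (simp add: lin_expand split_def)
lemma counit: "lin (\<lambda>(g, x). smult (eA x) (K g)) (f h) = K h"
  using arg_cong[OF counit_bv, of "lin K"] by (simp add: lin_expand split_def lin_smult)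
lemma mult: "lin (\<lambda>z. lin K (f z)) (mH h g)
    = lin (\<lambda>(h0, h1). lin (\<lambda>(g0, g1). lin (\<lambda>p. lin (\<lambda>q. K (p, q)) (mA h1 g1)) (mH h0 g0)) (f g)) (f h)"
  using arg_cong[OF mult_bv[unfolded mulv_tmul], of "lin K"]
  by (simp add: lin_assoc tens_def split_def)
lemma unit: "lin (\<lambda>z. lin K (f z)) uH = lin (\<lambda>p. lin (\<lambda>q. K (p, q)) uA) uH"
  using arg_cong[OF unit_bv, of "lin K"] by (simp add: lin_expand)

end

section \<open>Twisted tensor coproducts\<close>

text \<open>
  The twisting map P : A \<otimes> H \<rightarrow> H \<otimes> A respects both coproducts, both counits, the
  multiplication and the unit; this makes a \<otimes> h \<mapsto> a1 \<otimes> P(a2 \<otimes> h1) \<otimes> h2 a Hopf algebra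
  structure on the algebra A \<otimes> H (tw_hopf).\<close>

locale twisted = A: hopf mA uA DA eA SA + H: hopf mH uH DH eH SH
  for mA :: "'a \<Rightarrow> 'a \<Rightarrow> ('a \<Rightarrow>\<^sub>0 'k::field)" and uA DA eA SA
    and mH :: "'h \<Rightarrow> 'h \<Rightarrow> ('h \<Rightarrow>\<^sub>0 'k)" and uH DH eH SH +
  fixes P :: "'a \<times> 'h \<Rightarrow> ('h \<times> 'a \<Rightarrow>\<^sub>0 'k)"
  assumes twist_comult_H_bv: "\<And>a h.
      lin (\<lambda>(k, b). lin (\<lambda>(k1, k2). bv (k1, k2, b)) (DH k)) (P (a, h))
      = lin (\<lambda>(h1, h2). lin (\<lambda>(k1, c). lin (\<lambda>(k2, b). bv (k1, k2, b)) (P (c, h2))) (P (a, h1))) (DH h)"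
    and twist_comult_A_bv: "\<And>a h.
      lin (\<lambda>(k, b). lin (\<lambda>(b1, b2). bv (k, b1, b2)) (DA b)) (P (a, h))
      = lin (\<lambda>(a1, a2). lin (\<lambda>(k, c). lin (\<lambda>(k', b1). bv (k', b1, c)) (P (a1, k))) (P (a2, h))) (DA a)"
    and twist_counit_A_bv: "\<And>a h.
      lin (\<lambda>(k, c). smult (eA c) (bv k)) (P (a, h)) = smult (eA a) (bv h)"
    and twist_counit_H_bv: "\<And>a h.
      lin (\<lambda>(k, c). smult (eH k) (bv c)) (P (a, h)) = smult (eH h) (bv a)"
    and twist_mult_bv: "\<And>a h b g.
      lin P (tens (mA a b) (mH h g)) = mulv (tmul mH mA) (P (a, h)) (P (b, g))"
    and twist_unit_bv: "lin P (tens uA uH) = tens uH uA"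
begin

lemma twist_comult_H: "lin (\<lambda>(k, b). lin (\<lambda>(k1, k2). K k1 k2 b) (DH k)) (P (a, h))
    = lin (\<lambda>(h1, h2). lin (\<lambda>(k1, c). lin (\<lambda>(k2, b). K k1 k2 b) (P (c, h2))) (P (a, h1))) (DH h)"
  using arg_cong[OF twist_comult_H_bv, of "lin (\<lambda>(a, b, c). K a b c)" a h]
  by (simp add: lin_expand split_def)
lemma twist_comult_A: "lin (\<lambda>(k, b). lin (\<lambda>(b1, b2). K k b1 b2) (DA b)) (P (a, h))
    = lin (\<lambda>(a1, a2). lin (\<lambda>(k, c). lin (\<lambda>(k', b1). K k' b1 c) (P (a1, k))) (P (a2, h))) (DA a)"
  using arg_cong[OF twist_comult_A_bv, of "lin (\<lambda>(a, b, c). K a b c)" a h]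
  by (simp add: lin_expand split_def)
lemma twist_counit_A: "lin (\<lambda>(k, c). smult (eA c) (F k)) (P (a, h)) = smult (eA a) (F h)"
  using arg_cong[OF twist_counit_A_bv, of "lin F" a h] by (simp add: lin_expand split_def lin_smult)
lemma twist_counit_H: "lin (\<lambda>(k, c). smult (eH k) (F c)) (P (a, h)) = smult (eH h) (F a)"
  using arg_cong[OF twist_counit_H_bv, of "lin F" a h] by (simp add: lin_expand split_def lin_smult)
lemma twist_mult: "lin (\<lambda>x. lin (\<lambda>y. lin K (P (x, y))) (mH h g)) (mA a b)
    = lin (\<lambda>(k1, c1). lin (\<lambda>(k2, c2). lin (\<lambda>k. lin (\<lambda>c. K (k, c)) (mA c1 c2)) (mH k1 k2))
        (P (b, g))) (P (a, h))"
  using arg_cong[OF twist_mult_bv[unfolded mulv_tmul], of "lin K" a b h g]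
  by (simp add: lin_assoc tens_def split_def)
lemma twist_unit: "lin (\<lambda>x. lin (\<lambda>y. lin K (P (x, y))) uH) uA = lin (\<lambda>k. lin (\<lambda>c. K (k, c)) uA) uH"
  using arg_cong[OF twist_unit_bv, of "lin K"] by (simp add: lin_expand)

text \<open>
  Normal form for the simplifier: sums over products and units innermost.  The swaps are
  instantiated for each structure map, since unrestricted swapping does not terminate.\<close>
lemmas mult_inward =
  lin_swap_split_inner[where w="DH _" and v="mA _ _"]
  lin_swap_split_inner[where w="P _" and v="mA _ _"]
  lin_swap_split_inner[where w="DA _" and v="mH _ _"]
  lin_swap_split_inner[where w="P _" and v="mH _ _"] lin_swap_split_inner[where w="DA _" and v=uH]
  lin_swap_split_inner[where w="P _" and v=uH] lin_swap[where w="mH _ _" and v=uA]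
  lin_swap[where w="mA _ _" and v=uH] lin_swap[where w=uA and v=uH]

definition tw_comult :: "'a \<times> 'h \<Rightarrow> (('a \<times> 'h) \<times> ('a \<times> 'h) \<Rightarrow>\<^sub>0 'k)" where
  "tw_comult p = lin (\<lambda>(a1, a2). lin (\<lambda>(h1, h2). lin (\<lambda>(k, b). bv ((a1, k), (b, h2)))
     (P (a2, h1))) (DH (snd p))) (DA (fst p))"

definition tw_counit :: "'a \<times> 'h \<Rightarrow> 'k" where
  "tw_counit = (\<lambda>(a, h). eA a * eH h)"

definition tw_antipode :: "'a \<times> 'h \<Rightarrow> ('a \<times> 'h \<Rightarrow>\<^sub>0 'k)" where
  "tw_antipode p = lin (\<lambda>(k, b). tens (SA b) (SH k)) (P p)"

lemma tw_comult_pair: "tw_comult (a, h) = lin (\<lambda>(a1, a2). lin (\<lambda>(h1, h2). lin (\<lambda>(k, b).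
    bv ((a1, k), (b, h2))) (P (a2, h1))) (DH h)) (DA a)"
  by (simp add: tw_comult_def)

lemma tw_coassoc_bv: "lin (\<lambda>(y, z). lin (\<lambda>(y1, y2). bv (y1, y2, z)) (tw_comult y)) (tw_comult (a, h))
    = lin (\<lambda>(y, z). lin (\<lambda>(z1, z2). bv (y, z1, z2)) (tw_comult z)) (tw_comult (a, h))"
  apply (simp add: tw_comult_pair lin_expand)
  apply (simp only: lin_swap_split[where w="DA _" and v="P _"]
      lin_swap_split[where w="DA _" and v="DH _"])
  apply (simp only: twist_comult_H A.coassoc H.coassoc twist_comult_A)
  apply (simp only: lin_swap_split[where w="DA _" and v="DH _"]
      lin_swap_split[where w="DH _" and v="P _"])
  apply (subst lin_swap_split[where w="P _" and v="P _"])
  apply (rule refl)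
  done

lemma tw_coassoc: "lin (\<lambda>(y, z). lin (\<lambda>(y1, y2). K y1 y2 z) (tw_comult y)) (tw_comult p)
    = lin (\<lambda>(y, z). lin (\<lambda>(z1, z2). K y z1 z2) (tw_comult z)) (tw_comult p)"
  using arg_cong[OF tw_coassoc_bv, of "lin (\<lambda>(a, b, c). K a b c)" "fst p" "snd p"]
  by (simp add: lin_assoc lin_assoc_split split_def)

lemma tw_lcounit: "lin (\<lambda>(y, z). smult (tw_counit y) (bv z)) (tw_comult (a, h)) = bv (a, h)"
  by (simp add: tw_comult_pair lin_expand tw_counit_def A.lcounit H.lcounit twist_counit_H)

lemma tw_rcounit: "lin (\<lambda>(y, z). smult (tw_counit z) (bv y)) (tw_comult (a, h)) = bv (a, h)"
  by (simp add: tw_comult_pair lin_expand tw_counit_def A.rcounit H.rcounit twist_counit_A)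

lemma tw_comult_mult: "lin tw_comult (tmul mA mH (a, h) (b, g))
    = mulv (tmul (tmul mA mH) (tmul mA mH)) (tw_comult (a, h)) (tw_comult (b, g))"
  apply (simp add: tw_comult_pair lin_expand mult_inward A.comult_mult H.comult_mult twist_mult)
  apply (simp only: lin_swap_split[where w="DA _" and v="DH _"]
      lin_swap_split[where w="DA _" and v="P _"]
      lin_swap_split[where w="DH _" and v="P _"])
  done

lemma tw_comult_unit: "lin tw_comult (tens uA uH) = tens (tens uA uH) (tens uA uH)"
  by (simp add: tw_comult_pair lin_expand mult_inward A.comult_unit H.comult_unit twist_unit)

lemma tw_counit_mult: "linf tw_counit (tmul mA mH (a, h) (b, g)) = tw_counit (a, h) * tw_counit (b, g)"
  by (simp add: tmul_pair tens_def linf_lin tw_counit_def linf_fun_mult linf_fun_mult_right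
      A.counit_mult H.counit_mult ac_simps)

lemma tw_counit_unit: "linf tw_counit (tens uA uH) = 1"
  by (simp add: tens_def linf_lin tw_counit_def linf_fun_mult linf_fun_mult_right
      A.counit_unit H.counit_unit)

lemma tw_lantipode: "lin (\<lambda>(y, z). mulv (tmul mA mH) (tw_antipode y) (bv z)) (tw_comult (a, h))
    = smult (tw_counit (a, h)) (tens uA uH)"
  apply (simp add: tw_comult_pair tw_antipode_def lin_expand mult_inward tw_counit_def)
  apply (simp only: lin_swap_split[where w="DH _" and v="DA _"])
  apply (simp only: twist_comult_A[symmetric])
  apply (simp only: lin_swap_split_outer[where w="SH _" and v="DA _"]
      lin_swap[where w="SH _" and v="SA _"])
  apply (simp add: A.lantipode twist_counit_A lin_expand mult_inward H.lantipode)
  done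

lemma tw_rantipode: "lin (\<lambda>(y, z). mulv (tmul mA mH) (bv y) (tw_antipode z)) (tw_comult (a, h))
    = smult (tw_counit (a, h)) (tens uA uH)"
  apply (simp add: tw_comult_pair tw_antipode_def lin_expand mult_inward tw_counit_def)
  apply (simp only: twist_comult_H[symmetric])
  apply (simp only: lin_swap_split_outer[where w="SA _" and v="DH _"]
      lin_swap[where w="mH _ _" and v="mA _ _"])
  apply (simp add: H.rantipode twist_counit_H lin_expand mult_inward A.rantipode)
  apply (simp add: smult_smult mult.commute)
  done

lemma tw_algebra: "is_algebra (tmul mA mH) (tens uA uH)"
  by (rule is_algebra_tmul[OF A.algebra H.algebra])

theorem tw_hopf: "is_hopf_algebra (tmul mA mH) (tens uA uH) tw_comult tw_counit tw_antipode"
  unfolding is_hopf_algebra_def is_bialgebra_def is_coalgebra_def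
  using tw_algebra tw_coassoc_bv tw_lcounit tw_rcounit tw_comult_mult tw_comult_unit
    tw_counit_mult tw_counit_unit tw_lantipode tw_rantipode
  by (auto simp: tmul_def)

end

locale bicrossed_smash =
  fixes mA :: "'a \<Rightarrow> 'a \<Rightarrow> ('a \<Rightarrow>\<^sub>0 'k::field)" and uA :: "'a \<Rightarrow>\<^sub>0 'k"
    and DA :: "'a \<Rightarrow> ('a \<times> 'a \<Rightarrow>\<^sub>0 'k)" and eA :: "'a \<Rightarrow> 'k" and SA :: "'a \<Rightarrow> ('a \<Rightarrow>\<^sub>0 'k)"
    and mH :: "'h \<Rightarrow> 'h \<Rightarrow> ('h \<Rightarrow>\<^sub>0 'k)" and uH :: "'h \<Rightarrow>\<^sub>0 'k"
    and D :: "'h \<Rightarrow> ('h \<times> 'h \<Rightarrow>\<^sub>0 'k)" and e :: "'h \<Rightarrow> 'k" and S :: "'h \<Rightarrow> ('h \<Rightarrow>\<^sub>0 'k)"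
    and D' :: "'h \<Rightarrow> ('h \<times> 'h \<Rightarrow>\<^sub>0 'k)" and e' :: "'h \<Rightarrow> 'k" and T :: "'h \<Rightarrow> ('h \<Rightarrow>\<^sub>0 'k)"
    and r :: "'a \<Rightarrow> ('h \<times> 'a \<Rightarrow>\<^sub>0 'k)" and f :: "'h \<Rightarrow> ('h \<times> 'a \<Rightarrow>\<^sub>0 'k)"
    and r' :: "'a \<Rightarrow> ('h \<times> 'a \<Rightarrow>\<^sub>0 'k)"
  assumes hopfA: "is_hopf_algebra mA uA DA eA SA"
    and braceH: "is_hopf_brace mH uH D e S D' e' T"
    and commH: "is_commutative mH"
    and mp: "hopf_matched_pair mA uA DA eA SA mH uH D e S r f"
    and cb: "left_comodule_bialgebra mH uH D' e' mA uA DA eA r'"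
begin

sublocale A: hopf mA uA DA eA SA
  by (rule hopf.intro, rule hopfA)
sublocale H: hopf mH uH D e S
  using braceH by (simp add: hopf_def is_hopf_brace_def)
sublocale H': hopf mH uH D' e' T
  using braceH by (simp add: hopf_def is_hopf_brace_def)
sublocale R: left_comod mH uH D e mA uA r
  using mp by (simp add: left_comod_def hopf_matched_pair_def)
sublocale F: right_comod mH uH mA uA DA eA f
  using mp by (simp add: right_comod_def hopf_matched_pair_def)
sublocale R': left_comod mH uH D' e' mA uA r'
  using cb by (simp add: left_comod_def left_comodule_bialgebra_def)

lemma mH_commute: "mH x y = mH y x"
  using commH by (simp add: is_commutative_def)

lemma HM1_rho: "lin (\<lambda>(h, x). smult (eA x) (K h)) (r a) = smult (eA a) (lin K uH)"
proof -
  have "lin (\<lambda>(h, x). smult (eA x) (bv h)) (r a) = smult (eA a) uH"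
    using mp by (simp add: hopf_matched_pair_def)
  from arg_cong[OF this, of "lin K"] show ?thesis
    by (simp add: lin_expand split_def lin_smult)
qed

lemma HM1_phi: "lin (\<lambda>(g, x). smult (e g) (K x)) (f h) = smult (e h) (lin K uA)"
proof -
  have "lin (\<lambda>(g, x). smult (e g) (bv x)) (f h) = smult (e h) uA"
    using mp by (simp add: hopf_matched_pair_def)
  from arg_cong[OF this, of "lin K"] show ?thesis
    by (simp add: lin_expand split_def lin_smult)
qed

lemma HM2: "lin (\<lambda>(h, x). lin (\<lambda>(x1, x2). K h x1 x2) (DA x)) (r a)
  = lin (\<lambda>(a1, a2). lin (\<lambda>(g1, b1). lin (\<lambda>(g2, b2). lin (\<lambda>(g20, g21).
      lin (\<lambda>p. lin (\<lambda>q. K p q b2) (mA b1 g21)) (mH g1 g20)) (f g2)) (r a2)) (r a1)) (DA a)"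
proof -
  have "lin (\<lambda>(h, x). lin (\<lambda>(x1, x2). bv (h, x1, x2)) (DA x)) (r a)
      = lin (\<lambda>(a1, a2). lin (\<lambda>(g1, b1). lin (\<lambda>(g2, b2). lin (\<lambda>(g20, g21).
          tens (mH g1 g20) (tens (mA b1 g21) (bv b2))) (f g2)) (r a2)) (r a1)) (DA a)"
    using mp by (simp add: hopf_matched_pair_def)
  from arg_cong[OF this, of "lin (\<lambda>(a, b, c). K a b c)"] show ?thesis
    by (simp add: lin_expand split_def)
qed

lemma HM3: "lin (\<lambda>(g, x). lin (\<lambda>(g1, g2). K g1 g2 x) (D g)) (f h)
  = lin (\<lambda>(h1, h2). lin (\<lambda>(h10, h11). lin (\<lambda>(g, y). lin (\<lambda>(h20, h21).
      lin (\<lambda>p. lin (\<lambda>q. K h10 p q) (mA y h21)) (mH g h20)) (f h2)) (r h11)) (f h1)) (D h)"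
proof -
  have "lin (\<lambda>(g, x). lin (\<lambda>(g1, g2). bv (g1, g2, x)) (D g)) (f h)
      = lin (\<lambda>(h1, h2). lin (\<lambda>(h10, h11). lin (\<lambda>(g, y). lin (\<lambda>(h20, h21).
          tens (bv h10) (tens (mH g h20) (mA y h21))) (f h2)) (r h11)) (f h1)) (D h)"
    using mp by (simp add: hopf_matched_pair_def)
  from arg_cong[OF this, of "lin (\<lambda>(a, b, c). K a b c)"] show ?thesis
    by (simp add: lin_expand split_def)
qed

abbreviation mulHA :: "('h \<times> 'a \<Rightarrow>\<^sub>0 'k) \<Rightarrow> ('h \<times> 'a \<Rightarrow>\<^sub>0 'k) \<Rightarrow> ('h \<times> 'a \<Rightarrow>\<^sub>0 'k)" where
  "mulHA \<equiv> mulv (tmul mH mA)"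

lemma HM4: "mulHA (f h) (r a) = mulHA (r a) (f h)"
  using mp by (simp add: hopf_matched_pair_def mulv_tmul)

lemma rho'_comult: "lin (\<lambda>(h, x). lin (\<lambda>(x1, x2). K h x1 x2) (DA x)) (r' a)
  = lin (\<lambda>(a1, a2). lin (\<lambda>(h1, x1). lin (\<lambda>(h2, x2). lin (\<lambda>p. K p x1 x2) (mH h1 h2))
      (r' a2)) (r' a1)) (DA a)"
proof -
  have "lin (\<lambda>(h, x). lin (\<lambda>(x1, x2). bv (h, x1, x2)) (DA x)) (r' a)
      = lin (\<lambda>(a1, a2). lin (\<lambda>(h1, x1). lin (\<lambda>(h2, x2).
          tens (mulv mH (bv h1) (bv h2)) (bv (x1, x2))) (r' a2)) (r' a1)) (DA a)"
    using cb by (simp add: left_comodule_bialgebra_def)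
  from arg_cong[OF this, of "lin (\<lambda>(a, b, c). K a b c)"] show ?thesis
    by (simp add: lin_expand split_def)
qed

lemma rho'_counit: "lin (\<lambda>(h, x). smult (eA x) (K h)) (r' a) = smult (eA a) (lin K uH)"
proof -
  have "lin (\<lambda>(h, x). smult (eA x) (bv h)) (r' a) = smult (eA a) uH"
    using cb by (simp add: left_comodule_bialgebra_def)
  from arg_cong[OF this, of "lin K"] show ?thesis
    by (simp add: lin_expand split_def lin_smult)
qed

lemma H_brace: "lin (\<lambda>(x, y). lin (\<lambda>(y1, y2). K x y1 y2) (D y)) (D' h)
  = lin (\<lambda>(x, y). lin (\<lambda>(x1, x2). lin (\<lambda>(x11, x12). lin (\<lambda>(y1, y2).
      lin (\<lambda>q. lin (\<lambda>p. lin (\<lambda>w. K w x12 y2) (mH p y1)) (mH x11 q)) (S x2)) (D' y)) (D' x1)) (D x)) (D h)"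
proof -
  have "lin (\<lambda>(x, y). lin (\<lambda>(y1, y2). bv (x, y1, y2)) (D y)) (D' h)
      = lin (\<lambda>(x, y). lin (\<lambda>(x1, x2). lin (\<lambda>(x11, x12). lin (\<lambda>(y1, y2).
          tens (mulv mH (mulv mH (bv x11) (S x2)) (bv y1)) (bv (x12, y2)))
        (D' y)) (D' x1)) (D x)) (D h)"
    using braceH by (simp add: is_hopf_brace_def)
  from arg_cong[OF this, of "lin (\<lambda>(a, b, c). K a b c)"] show ?thesis
    by (simp add: lin_expand split_def)
qed

definition bic_twist :: "'a \<times> 'h \<Rightarrow> ('h \<times> 'a \<Rightarrow>\<^sub>0 'k)" where
  "bic_twist = (\<lambda>(a, h). lin (\<lambda>(g, b). lin (\<lambda>(h0, h1). tens (mH g h0) (mA b h1)) (f h)) (r a))"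

definition smash_twist :: "'a \<times> 'h \<Rightarrow> ('h \<times> 'a \<Rightarrow>\<^sub>0 'k)" where
  "smash_twist = (\<lambda>(a, h). lin (\<lambda>(g, b). tens (mH g h) (bv b)) (r' a))"

lemma bic_twist_pair:
  "bic_twist (a, h) = lin (\<lambda>(g, b). lin (\<lambda>(h0, h1). tens (mH g h0) (mA b h1)) (f h)) (r a)"
  by (simp add: bic_twist_def)

lemma smash_twist_pair: "smash_twist (a, h) = lin (\<lambda>(g, b). tens (mH g h) (bv b)) (r' a)"
  by (simp add: smash_twist_def)

lemmas mult_inward =
  lin_swap[where w="S _" and v="mA _ _"] lin_swap_split_inner[where w="D _" and v="mA _ _"]
  lin_swap_split_inner[where w="D' _" and v="mA _ _"]
  lin_swap_split_inner[where w="r _" and v="mA _ _"]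
  lin_swap_split_inner[where w="f _" and v="mA _ _"] lin_swap[where w="S _" and v="mH _ _"]
  lin_swap_split_inner[where w="DA _" and v="mH _ _"]
  lin_swap_split_inner[where w="D _" and v="mH _ _"]
  lin_swap_split_inner[where w="D' _" and v="mH _ _"]
  lin_swap_split_inner[where w="r _" and v="mH _ _"]
  lin_swap_split_inner[where w="r' _" and v="mH _ _"]
  lin_swap_split_inner[where w="f _" and v="mH _ _"] lin_swap[where w="S _" and v=uA]
  lin_swap_split_inner[where w="D _" and v=uA] lin_swap_split_inner[where w="D' _" and v=uA]
  lin_swap_split_inner[where w="f _" and v=uA]
  lin_swap_split_inner[where w="smash_twist _" and v=uA] lin_swap[where w="S _" and v=uH]
  lin_swap_split_inner[where w="D _" and v=uH] lin_swap_split_inner[where w="D' _" and v=uH]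
  lin_swap_split_inner[where w="r _" and v=uH] lin_swap_split_inner[where w="r' _" and v=uH]
  lin_swap_split_inner[where w="f _" and v=uH] lin_swap[where w="mH _ _" and v=uA]
  lin_swap[where w="mA _ _" and v=uH] lin_swap[where w="mH _ _" and v=uH]

lemma bic_twist_comult_H_bv: "lin (\<lambda>(k, b). lin (\<lambda>(k1, k2). bv (k1, k2, b)) (D k)) (bic_twist (a, h))
    = lin (\<lambda>(h1, h2). lin (\<lambda>(k1, c). lin (\<lambda>(k2, b). bv (k1, k2, b)) (bic_twist (c, h2)))
        (bic_twist (a, h1))) (D h)"
  apply (simp add: bic_twist_pair lin_expand mult_inward H.comult_mult R.mult F.mult)
  apply (simp only: lin_swap_split[where w="D _" and v="f _"])
  apply (simp only: R.coassoc HM3)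
  apply (simp only: lin_swap_split[where w="D _" and v="r _"]
      lin_swap_split[where w="r _" and v="f _"])
  apply (simp only: lin_swap[where w="mH _ _" and v="mA _ _"])
  apply (simp only: H.assoc A.assoc)
  apply (subst (2) lin_swap[where w="mH _ _" and v="mH _ _"])
  apply (rule refl)
  done

lemma bic_twist_comult_A_bv: "lin (\<lambda>(k, b). lin (\<lambda>(b1, b2). bv (k, b1, b2)) (DA b)) (bic_twist (a, h))
    = lin (\<lambda>(a1, a2). lin (\<lambda>(k, c). lin (\<lambda>(k', b1). bv (k', b1, c)) (bic_twist (a1, k)))
        (bic_twist (a2, h))) (DA a)"
  apply (simp add: bic_twist_pair lin_expand mult_inward A.comult_mult R.mult F.mult)
  apply (simp only: lin_swap_split[where w="DA _" and v="f _"])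
  apply (simp only: HM2 F.coassoc[symmetric])
  apply (simp only: mult_inward)
  apply (simp only: lin_swap_split[where w="f h" and v="r _"]
      lin_swap_split[where w="f h" and v="f _"])
  apply (simp only: lin_swap[where w="mH _ _" and v="mA _ _"])
  apply (simp only: H.assoc A.assoc)
  apply (subst lin_swap_split[where w="r _" and v="r _"])
  apply (subst lin_swap[where w="mA _ _" and v="mA _ _"])
  apply (rule refl)
  done

lemma bic_twist_counit_A_bv: "lin (\<lambda>(k, c). smult (eA c) (bv k)) (bic_twist (a, h)) = smult (eA a) (bv h)"
  by (simp add: bic_twist_pair lin_expand mult_inward A.counit_mult_smult F.counit HM1_rho
      H.lunit H.lunit[where K=bv, simplified])

lemma bic_twist_counit_H_bv: "lin (\<lambda>(k, c). smult (e k) (bv c)) (bic_twist (a, h)) = smult (e h) (bv a)"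
  by (simp add: bic_twist_pair lin_expand mult_inward H.counit_mult_smult HM1_phi A.runit R.counit
      A.runit[where K=bv, simplified])

lemma mulHA_assoc: "mulHA (mulHA x y) z = mulHA x (mulHA y z)"
  by (rule algebra_mulv_assoc[OF is_algebra_tmul[OF H.algebra A.algebra]])

lemma mulHA_lunit: "mulHA (tens uH uA) x = x"
  by (rule algebra_mulv_lunit[OF is_algebra_tmul[OF H.algebra A.algebra]])

lemma bic_twist_mulHA: "bic_twist (x, y) = mulHA (r x) (f y)"
  by (simp add: bic_twist_pair mulv_tmul)

lemma bic_twist_tens: "lin bic_twist (tens U V) = mulHA (lin r U) (lin f V)"
  by (simp add: tens_def lin_assoc bic_twist_mulHA mulv_lin_left mulv_lin_right
      lin_swap[where w=U and v=V])

lemma bic_twist_mult_bv: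
  "lin bic_twist (tens (mA a b) (mH h g)) = mulHA (bic_twist (a, h)) (bic_twist (b, g))"
proof -
  have "lin bic_twist (tens (mA a b) (mH h g)) = mulHA (mulHA (r a) (r b)) (mulHA (f h) (f g))"
    by (simp add: bic_twist_tens R.mult_bv F.mult_bv)
  also have "\<dots> = mulHA (r a) (mulHA (mulHA (r b) (f h)) (f g))"
    by (simp only: mulHA_assoc)
  also have "\<dots> = mulHA (r a) (mulHA (mulHA (f h) (r b)) (f g))"
    by (simp only: HM4)
  also have "\<dots> = mulHA (mulHA (r a) (f h)) (mulHA (r b) (f g))"
    by (simp only: mulHA_assoc)
  finally show ?thesis by (simp add: bic_twist_mulHA)
qed

lemma bic_twist_unit_bv: "lin bic_twist (tens uA uH) = tens uH uA"
  by (simp add: bic_twist_tens R.unit_bv F.unit_bv mulHA_lunit)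

lemma smash_twist_comult_H_bv:
  "lin (\<lambda>(k, b). lin (\<lambda>(k1, k2). bv (k1, k2, b)) (D' k)) (smash_twist (a, h))
    = lin (\<lambda>(h1, h2). lin (\<lambda>(k1, c). lin (\<lambda>(k2, b). bv (k1, k2, b)) (smash_twist (c, h2)))
        (smash_twist (a, h1))) (D' h)"
  apply (simp add: smash_twist_pair lin_expand mult_inward H'.comult_mult)
  apply (simp only: R'.coassoc)
  apply (simp only: lin_swap_split[where w="D' _" and v="r' _"])
  done

lemma smash_twist_comult_A_bv:
  "lin (\<lambda>(k, b). lin (\<lambda>(b1, b2). bv (k, b1, b2)) (DA b)) (smash_twist (a, h))
    = lin (\<lambda>(a1, a2). lin (\<lambda>(k, c). lin (\<lambda>(k', b1). bv (k', b1, c)) (smash_twist (a1, k)))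
        (smash_twist (a2, h))) (DA a)"
  apply (simp add: smash_twist_pair lin_expand mult_inward)
  apply (simp only: rho'_comult)
  apply (simp only: H.assoc)
  apply (subst lin_swap_split[where w="r' _" and v="r' _"])
  apply (rule refl)
  done

lemma smash_twist_counit_A_bv:
  "lin (\<lambda>(k, c). smult (eA c) (bv k)) (smash_twist (a, h)) = smult (eA a) (bv h)"
  by (simp add: smash_twist_pair lin_expand mult_inward rho'_counit H.lunit[where K=bv, simplified])

lemma smash_twist_counit_H_bv:
  "lin (\<lambda>(k, c). smult (e' k) (bv c)) (smash_twist (a, h)) = smult (e' h) (bv a)"
  by (simp add: smash_twist_pair lin_expand mult_inward H'.counit_mult_smult R'.counit)

lemma smash_twist_mulHA: "smash_twist (x, y) = mulHA (r' x) (tens (bv y) uA)"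
  by (simp add: smash_twist_pair mulv_tmul tens_def lin_assoc lin_assoc_split mult_inward A.runit)

lemma smash_twist_tens: "lin smash_twist (tens U V) = mulHA (lin r' U) (tens V uA)"
proof -
  have "lin smash_twist (tens U V) = lin (\<lambda>x. mulHA (r' x) (lin (\<lambda>y. tens (bv y) uA) V)) U"
    by (simp add: tens_def lin_assoc smash_twist_mulHA mulv_lin_right)
  also have "\<dots> = mulHA (lin r' U) (tens V uA)"
    by (simp only: tens_lin_left[symmetric] lin_bv_id mulv_lin_left)
  finally show ?thesis .
qed

lemma mulv_H_commute: "mulv mH U V = mulv mH V U"
  unfolding mulv_def by (simp add: mH_commute lin_swap[where w=U and v=V])

lemma mulHA_central: "mulHA (tens V uA) W = mulHA W (tens V uA)"
proof -
  have "mulHA (tens V uA) (bv x) = mulHA (bv x) (tens V uA)" for x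
    by (cases x) (simp only: bv_pair mulv_tmul_tens A.mulv_lunit A.mulv_runit mulv_H_commute[of V])
  then have "lin (\<lambda>x. mulHA (tens V uA) (bv x)) W = lin (\<lambda>x. mulHA (bv x) (tens V uA)) W"
    by simp
  then show ?thesis
    by (simp add: mulv_lin_left[symmetric] mulv_lin_right[symmetric])
qed

lemma smash_twist_mult_bv:
  "lin smash_twist (tens (mA a b) (mH h g)) = mulHA (smash_twist (a, h)) (smash_twist (b, g))"
proof -
  have "tens (mH h g) uA = mulHA (tens (bv h) uA) (tens (bv g) uA)"
    by (simp add: mulv_tmul_tens A.mulv_lunit mulv_bv)
  then have "lin smash_twist (tens (mA a b) (mH h g))
      = mulHA (mulHA (r' a) (r' b)) (mulHA (tens (bv h) uA) (tens (bv g) uA))"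
    by (simp add: smash_twist_tens R'.mult_bv)
  also have "\<dots> = mulHA (r' a) (mulHA (mulHA (r' b) (tens (bv h) uA)) (tens (bv g) uA))"
    by (simp only: mulHA_assoc)
  also have "\<dots> = mulHA (r' a) (mulHA (mulHA (tens (bv h) uA) (r' b)) (tens (bv g) uA))"
    by (simp only: mulHA_central)
  also have "\<dots> = mulHA (mulHA (r' a) (tens (bv h) uA)) (mulHA (r' b) (tens (bv g) uA))"
    by (simp only: mulHA_assoc)
  finally show ?thesis by (simp add: smash_twist_mulHA)
qed

lemma smash_twist_unit_bv: "lin smash_twist (tens uA uH) = tens uH uA"
  by (simp add: smash_twist_tens R'.unit_bv mulHA_lunit)

end

sublocale bicrossed_smash \<subseteq> Bic: twisted mA uA DA eA SA mH uH D e S bic_twist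
  by unfold_locales (fact bic_twist_comult_H_bv bic_twist_comult_A_bv bic_twist_counit_A_bv
      bic_twist_counit_H_bv bic_twist_mult_bv bic_twist_unit_bv)+

sublocale bicrossed_smash \<subseteq> Sm: twisted mA uA DA eA SA mH uH D' e' T smash_twist
  by unfold_locales (fact smash_twist_comult_H_bv smash_twist_comult_A_bv smash_twist_counit_A_bv
      smash_twist_counit_H_bv smash_twist_mult_bv smash_twist_unit_bv)+

section \<open>Reduction of the brace identity\<close>

context bicrossed_smash
begin

text \<open>
  Both sides of the brace identity for A \<otimes> H at a \<otimes> h have the form frame a (\<lambda>b. X b h),
  and frame a has a left inverse (frame_counit).  So the identity reduces to core_lhs = core_rhs,
  an identity in H \<otimes> H \<otimes> A \<otimes> H.  With P = bic_twist and P' = smash_twist,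
  core_lhs b h = b_{(-1)'}h_{1'} \<otimes> P(b_{(0)'} \<otimes> h_{2'1}) \<otimes> h_{2'2} and
  core_rhs b h = k_{11'}S(k_2)P'(d \<otimes> h_{21'})_H \<otimes> k_{12'} \<otimes> P'(d \<otimes> h_{21'})_A \<otimes> h_{22'},
  where k \<otimes> d = P(b \<otimes> h_1).\<close>

definition core_lhs :: "'a \<Rightarrow> 'h \<Rightarrow> ('h \<times> 'h \<times> 'a \<times> 'h \<Rightarrow>\<^sub>0 'k)" where
  "core_lhs b h = lin (\<lambda>(h1, h2). lin (\<lambda>(\<kappa>, c). lin (\<lambda>(g1, g2). lin (\<lambda>(k, c'). bv (\<kappa>, k, c', g2))
     (bic_twist (c, g1))) (D h2)) (smash_twist (b, h1))) (D' h)"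

definition core_rhs :: "'a \<Rightarrow> 'h \<Rightarrow> ('h \<times> 'h \<times> 'a \<times> 'h \<Rightarrow>\<^sub>0 'k)" where
  "core_rhs b h = lin (\<lambda>(g, h2). lin (\<lambda>(\<kappa>, \<delta>). lin (\<lambda>(k, \<gamma>). lin (\<lambda>(k1, k2). lin (\<lambda>(h21, h22).
     lin (\<lambda>(q, s). lin (\<lambda>sg. lin (\<lambda>t. lin (\<lambda>w. bv (w, k2, s, h22)) (mH t q)) (mH k1 sg)) (S \<gamma>))
     (smash_twist (\<delta>, h21))) (D' h2)) (D' k)) (D \<kappa>)) (bic_twist (b, g))) (D h)"

definition frame :: "'a \<Rightarrow> ('a \<Rightarrow> ('h \<times> 'h \<times> 'a \<times> 'h \<Rightarrow>\<^sub>0 'k))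
    \<Rightarrow> (('a \<times> 'h) \<times> ('a \<times> 'h) \<times> ('a \<times> 'h) \<Rightarrow>\<^sub>0 'k)" where
  "frame a X = lin (\<lambda>(a1, a2). lin (\<lambda>(a21, a22). lin (\<lambda>(\<kappa>, k, c, g2). lin (\<lambda>(k', c1).
     bv ((a1, k'), (c1, k), (c, g2))) (smash_twist (a21, \<kappa>))) (X a22)) (DA a2)) (DA a)"

lemma frame_counit:
  "lin (\<lambda>((x1, x2), (y1, y2), (z1, z2)). smult (eA x1 * eA y1) (bv (x2, y2, z1, z2))) (frame a X) = X a"
  by (simp add: frame_def lin_expand lin_case_prod)
     (simp add: Sm.twist_counit_A A.lcounit lin_fun_smult_split case_prod_eta)

lemma brace_lhs_frame:
  "lin (\<lambda>(x, y). lin (\<lambda>(y1, y2). bv (x, y1, y2)) (Bic.tw_comult y)) (Sm.tw_comult (a, h))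
   = frame a (\<lambda>b. core_lhs b h)"
  apply (simp add: Bic.tw_comult_pair Sm.tw_comult_pair frame_def core_lhs_def lin_expand
      Sm.twist_comult_A)
  apply (simp only: lin_swap_split[where w="DA _" and v="D' _"]
      lin_swap_split[where w="D _" and v="smash_twist _"]
      lin_swap_split[where w="bic_twist _" and v="smash_twist _"])
  done

lemma Bic_antipode_Sm_comult:
  "lin (\<lambda>(z1, z2). lin (\<lambda>s. lin (\<lambda>(y1, y2). tens (mulv (tmul mA mH) (bv s) (bv y1)) (bv y2))
      (Sm.tw_comult z2)) (Bic.tw_antipode z1)) (Bic.tw_comult (c, h))
   = lin (\<lambda>(h1, h2). lin (\<lambda>(\<gamma>, \<delta>). lin (\<lambda>sg. lin (\<lambda>(h21, h22). lin (\<lambda>(q, s').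
      tens (tens uA (mH sg q)) (bv (s', h22))) (smash_twist (\<delta>, h21))) (D' h2)) (S \<gamma>))
      (bic_twist (c, h1))) (D h)"
  apply (simp add: Bic.tw_comult_pair Sm.tw_comult_pair Bic.tw_antipode_def lin_expand mult_inward)
  apply (simp only: lin_swap_split[where w="D _" and v="DA _"])
  apply (simp only: Bic.twist_comult_A[symmetric])
  apply (simp only: lin_swap_split_inner[where w="DA _" and v="SA _"]
      lin_swap_split_inner[where w="DA _" and v="S _"])
  apply (simp only: A.coassoc[symmetric])
  apply (simp only: lin_swap[where w="mA _ _" and v="S _"]
      lin_swap_split_outer[where w="mA _ _" and v="D' _"]
      lin_swap_split_outer[where w="mA _ _" and v="smash_twist _"])
  apply (simp only: A.lantipode)
  apply (simp add: A.lcounit lin_expand mult_inward)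
  done

lemma Bic_antipode_Sm_comult_cont:
  "lin (\<lambda>(z1, z2). lin (\<lambda>s. lin (\<lambda>(y1, y2). lin (\<lambda>w. K w y2) (tmul mA mH s y1))
      (Sm.tw_comult z2)) (Bic.tw_antipode z1)) (Bic.tw_comult z)
   = lin (\<lambda>(h1, h2). lin (\<lambda>(\<gamma>, \<delta>). lin (\<lambda>sg. lin (\<lambda>(h21, h22). lin (\<lambda>(q, s').
      lin (\<lambda>w. K w (s', h22)) (tens uA (mH sg q))) (smash_twist (\<delta>, h21))) (D' h2)) (S \<gamma>))
      (bic_twist (fst z, h1))) (D (snd z))"
  using arg_cong[OF Bic_antipode_Sm_comult, of "lin (\<lambda>(w, y2). K w y2)" "fst z" "snd z"]
  by (simp add: lin_assoc lin_assoc_split tens_def mulv_bv split_def)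

lemma smash_twist_mult_H: "lin (\<lambda>w. lin K (smash_twist (a, w))) (mH x y)
    = lin (\<lambda>(k, c). lin (\<lambda>k'. K (k', c)) (mH k y)) (smash_twist (a, x))"
  by (simp add: smash_twist_pair lin_expand mult_inward H.assoc)

lemma brace_rhs_frame:
  "lin (\<lambda>(x, y). lin (\<lambda>(x1, x2). lin (\<lambda>(x11, x12). lin (\<lambda>(y1, y2).
      tens (mulv (tmul mA mH) (mulv (tmul mA mH) (bv x11) (Bic.tw_antipode x2)) (bv y1)) (bv (x12, y2)))
    (Sm.tw_comult y)) (Sm.tw_comult x1)) (Bic.tw_comult x)) (Bic.tw_comult (a, h))
   = frame a (\<lambda>b. core_rhs b h)"
proof -
  have factor: "tens (mulv (tmul mA mH) (mulv (tmul mA mH) (bv x) (Bic.tw_antipode z)) (bv y)) (bv p)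
     = lin (\<lambda>s. lin (\<lambda>w. tens (mulv (tmul mA mH) (bv x) (bv w)) (bv p)) (tmul mA mH s y))
         (Bic.tw_antipode z)" for x z y p
  proof -
    have "mulv (tmul mA mH) (mulv (tmul mA mH) (bv x) (Bic.tw_antipode z)) (bv y)
        = mulv (tmul mA mH) (bv x) (mulv (tmul mA mH) (Bic.tw_antipode z) (bv y))"
      by (rule algebra_mulv_assoc[OF Bic.tw_algebra])
    also have "\<dots> = lin (\<lambda>s. mulv (tmul mA mH) (bv x) (tmul mA mH s y)) (Bic.tw_antipode z)"
      by (simp add: mulv_lin_right[symmetric] mulv_bv_right)
    finally show ?thesis
      by (simp only: tens_lin_left[symmetric] mulv_lin_right[symmetric] lin_bv_id)
  qed
  show ?thesis
    apply (simp only: Bic.tw_coassoc factor)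
    apply (simp only: lin_swap_split_outer[where w="Bic.tw_antipode _" and v="Sm.tw_comult _"])
    apply (subst lin_swap_split_inner[where w="Sm.tw_comult _" and v="Bic.tw_antipode _"])
    apply (subst lin_swap_split[where w="Sm.tw_comult _" and v="Bic.tw_comult _"])
    apply (simp only: Bic_antipode_Sm_comult_cont)
    apply (simp add: Bic.tw_comult_pair Sm.tw_comult_pair frame_def core_rhs_def lin_expand
        mult_inward
        smash_twist_mult_H)
    apply (simp only: lin_swap_split[where w="DA _" and v="D _"]
        lin_swap_split[where w="DA _" and v="bic_twist _"])
    apply (simp only: A.coassoc A.runit)
    apply (simp only: lin_swap_split[where w="D _" and v="smash_twist _"]
        lin_swap_split[where w="D _" and v="D' _"]
        lin_swap_split[where w="D _" and v="bic_twist _"])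
    apply (simp only: H.coassoc[symmetric])
    apply (simp only: lin_swap_split[where w="bic_twist _" and v="smash_twist _"]
        lin_swap_split[where w="bic_twist _" and v="D' _"])
    apply (simp only: Bic.twist_comult_H[symmetric])
    apply (simp only: H.assoc)
    apply (simp only: lin_swap_split[where w="D' _" and v="smash_twist _"]
        lin_swap_split_inner[where w="D' _" and v="S _"])
    apply (simp only: lin_swap_split_outer[where w="S _" and v="smash_twist _"])
    apply (subst lin_swap_split[where w="smash_twist _" and v="smash_twist _"])
    apply (rule refl)
    done
qed

section \<open>The two conditions\<close>

definition cond_A :: "'a \<Rightarrow> bool" where
  "cond_A a \<longleftrightarrow> lin (\<lambda>(g, b). lin (\<lambda>(g2, c). bv (g, g2, c)) (r b)) (r' a)
   = lin (\<lambda>(h, b). lin (\<lambda>(h1, h2). lin (\<lambda>(h11, h12). lin (\<lambda>(g, c).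
       tens (mulv mH (mulv mH (bv h11) (S h2)) (bv g)) (tens (bv h12) (bv c)))
     (r' b)) (D' h1)) (D h)) (r a)"

definition cond_H :: "'h \<Rightarrow> bool" where
  "cond_H h \<longleftrightarrow> lin (\<lambda>(h1, h2). lin (\<lambda>(g, x). bv (h1, g, x)) (f h2)) (D' h)
   = lin (\<lambda>(h1, h2). lin (\<lambda>(g, x). lin (\<lambda>(g1, g2). lin (\<lambda>(g11, g12). lin (\<lambda>(f', y).
       tens (mulv mH (mulv mH (mulv mH (bv g11) (S g2)) (bv f')) (bv h2)) (tens (bv g12) (bv y)))
     (r' x)) (D' g1)) (D g)) (f h1)) (D h)"

lemma cond_A_cont:
  assumes "cond_A a"
  shows "lin (\<lambda>(g, b). lin (\<lambda>(g2, c). K g g2 c) (r b)) (r' a)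
    = lin (\<lambda>(h, b). lin (\<lambda>(h1, h2). lin (\<lambda>(h11, h12). lin (\<lambda>(g, c). lin (\<lambda>s. lin (\<lambda>t.
        lin (\<lambda>w. K w h12 c) (mH t g)) (mH h11 s)) (S h2)) (r' b)) (D' h1)) (D h)) (r a)"
  using arg_cong[OF assms[unfolded cond_A_def], of "lin (\<lambda>(a, b, c). K a b c)"]
  by (simp add: lin_expand split_def)

lemma cond_H_cont:
  assumes "cond_H h"
  shows "lin (\<lambda>(h1, h2). lin (\<lambda>(g, x). K h1 g x) (f h2)) (D' h)
    = lin (\<lambda>(h1, h2). lin (\<lambda>(g, x). lin (\<lambda>(g1, g2). lin (\<lambda>(g11, g12). lin (\<lambda>(f', y).
        lin (\<lambda>s. lin (\<lambda>t. lin (\<lambda>u. lin (\<lambda>w. K w g12 y) (mH u h2)) (mH t f')) (mH g11 s)) (S g2))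
      (r' x)) (D' g1)) (D g)) (f h1)) (D h)"
  using arg_cong[OF assms[unfolded cond_H_def], of "lin (\<lambda>(a, b, c). K a b c)"]
  by (simp add: lin_expand split_def)

text \<open>cond_H solved for \<phi>(h), using the antipode of (H, \<Delta>):
  h_{1'}S(h_2) \<otimes> \<phi>(h_{2'}) = h_{[0]11'}S(h_{[0]2}) h_{[1](-1)'} \<otimes> h_{[0]12'} \<otimes> h_{[1](0)'}.\<close>
lemma cond_H_antipode:
  assumes "\<forall>h. cond_H h"
  shows "lin (\<lambda>(x1, x2). lin (\<lambda>(x11, x12). lin (\<lambda>(w0, w1). lin (\<lambda>s. lin (\<lambda>t. bv (t, w0, w1))
      (mH x11 s)) (S x2)) (f x12)) (D' x1)) (D x)
    = lin (\<lambda>(g, x'). lin (\<lambda>(g1, g2). lin (\<lambda>(g11, g12). lin (\<lambda>(f', y). lin (\<lambda>s. lin (\<lambda>t.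
      lin (\<lambda>u. bv (u, g12, y)) (mH t f')) (mH g11 s)) (S g2)) (r' x')) (D' g1)) (D g)) (f x)"
  apply (simp only: cond_H_cont[OF assms[rule_format]] H.coassoc)
  apply (simp only: lin_swap_split[where w="f _" and v="D _"])
  apply (subst lin_swap_split[where w="D _" and v="D _"])
  apply (simp only: lin_swap_split[where w="D' _" and v="D _"]
      lin_swap_split[where w="r' _" and v="D _"]
      lin_swap_split_outer[where w="S _" and v="D _"] lin_swap_split_outer[where w="mH _ _" and
          v="D _"])
  apply (simp only: lin_swap[where w="S _" and v="mH _ _"])
  apply (simp only: H.assoc H.rantipode)
  apply (simp add: H.runit lin_fun_smult lin_fun_smult_split H.rcounit)
  done

lemma cond_H_antipode_cont:
  assumes "\<forall>h. cond_H h"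
  shows "lin (\<lambda>(x1, x2). lin (\<lambda>(x11, x12). lin (\<lambda>(w0, w1). lin (\<lambda>s. lin (\<lambda>t. K t w0 w1)
      (mH x11 s)) (S x2)) (f x12)) (D' x1)) (D x)
    = lin (\<lambda>(g, x'). lin (\<lambda>(g1, g2). lin (\<lambda>(g11, g12). lin (\<lambda>(f', y). lin (\<lambda>s. lin (\<lambda>t.
      lin (\<lambda>u. K u g12 y) (mH t f')) (mH g11 s)) (S g2)) (r' x')) (D' g1)) (D g)) (f x)"
  using arg_cong[OF cond_H_antipode[OF assms], of "lin (\<lambda>(a, b, c). K a b c)" x]
  by (simp add: lin_expand split_def)

lemma mulv_H_assoc_commute: "mulv mH x (mulv mH y z) = mulv mH y (mulv mH x z)"
  by (metis H.mulv_assoc mulv_H_commute)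

lemma core_eq_of_conditions:
  assumes A: "\<forall>a. cond_A a" and H: "\<forall>h. cond_H h"
  shows "core_lhs b h = core_rhs b h"
  apply (simp add: core_lhs_def core_rhs_def bic_twist_pair smash_twist_pair lin_expand mult_inward)
  apply (simp only: lin_swap_split[where w="D _" and v="r' _"])
  apply (simp only: H_brace)
  apply (simp only: mult_inward)
  apply (simp only: lin_swap_split[where w="f _" and v="r' _"]
      lin_swap_split[where w="f _" and v="r _"]
      lin_swap_split[where w="f _" and v="D' _"] lin_swap_split_inner[where w="f _" and v="S _"])
  apply (simp only: lin_swap_split_outer[where w="S _" and v="D' _"])
  apply (simp only: lin_swap_split_outer[where w="mH _ _" and v="D' _"]
      lin_swap_split_outer[where w="mH _ _" and v="r' _"] lin_swap_split_outer[where w="mH _ _" and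
          v="r _"])
  apply (simp only: cond_H_antipode_cont[OF H])
  apply (simp only: mult_inward)
  apply (simp only: lin_swap_split[where w="r _" and v="f _"]
      lin_swap_split[where w="r _" and v="D _"]
      lin_swap_split[where w="r _" and v="D' _"] lin_swap_split[where w="r _" and v="r' _"]
      lin_swap_split_inner[where w="r _" and v="S _"])
  apply (simp only: cond_A_cont[OF A[rule_format]])
  apply (simp add: H.comult_mult H'.comult_mult R'.mult H.antipode_antimult_cont mult_inward)
  \<comment> \<open>The two sides now differ only in the order of independent sums and by commutativity of H:
      descend binder by binder, pulling the sums that are out of order to the front.\<close>
  apply (simp only: lin_swap_split[where w="r b"] lin_swap_split_inner[where w="r b"])
  apply (rule lin_cong_split)
  subgoal for \<rho>1 \<rho>0
    apply (rule lin_cong_split)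
    subgoal for x y
      apply (rule lin_cong_split)
      subgoal for \<phi>0 \<phi>1
        apply (simp only: lin_swap_split[where w="D \<rho>1"] lin_swap_split_inner[where w="D \<rho>1"])
        apply (rule lin_cong_split)
        subgoal for \<rho>11 \<rho>12
          apply (rule lin_cong_split)
          subgoal for \<phi>01 \<phi>02
            apply (simp only: lin_swap_split[where w="D' \<rho>11"]
                lin_swap_split_inner[where w="D' \<rho>11"])
            apply (rule lin_cong_split)
            subgoal for \<rho>111 \<rho>112
              apply (rule lin_cong_split)
              subgoal for \<phi>011 \<phi>012
                apply (simp only: lin_swap_split[where w="D' y"]
                    lin_swap_split_inner[where w="D' y"])
                apply (rule lin_cong_split)
                subgoal for y1 y2
                  apply (simp only: lin_swap_split[where w="r' \<rho>0"]
                      lin_swap_split_inner[where w="r' \<rho>0"])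
                  apply (simp only: bv_pair mulv_bv[symmetric] tens_lin_left[symmetric]
                      tens_lin_right[symmetric]
                      mulv_lin_left[symmetric] mulv_lin_right[symmetric] lin_bv_id)
                  apply (simp only: H.mulv_assoc mulv_H_commute mulv_H_assoc_commute)
                  done
                done
              done
            done
          done
        done
      done
    done
  done


lemma core_lhs_unit_H:
  "lin (\<lambda>(\<kappa>, k, c, g2). smult (e' g2) (bv (\<kappa>, k, c))) (lin (\<lambda>h. core_lhs a h) uH)
   = lin (\<lambda>(g, b). lin (\<lambda>(g2, c). bv (g, g2, c)) (r b)) (r' a)"
  by (simp add: core_lhs_def bic_twist_pair smash_twist_pair lin_expand mult_inward H'.comult_unit
      H.comult_unit F.unit H.runit A.runit H'.counit_unit_smult)

lemma core_rhs_unit_H: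
  "lin (\<lambda>(\<kappa>, k, c, g2). smult (e' g2) (bv (\<kappa>, k, c))) (lin (\<lambda>h. core_rhs a h) uH)
   = lin (\<lambda>(h, b). lin (\<lambda>(h1, h2). lin (\<lambda>(h11, h12). lin (\<lambda>(g, c).
       tens (mulv mH (mulv mH (bv h11) (S h2)) (bv g)) (tens (bv h12) (bv c)))
     (r' b)) (D' h1)) (D h)) (r a)"
  by (simp add: core_rhs_def bic_twist_pair smash_twist_pair lin_expand mult_inward H'.comult_unit
      H.comult_unit F.unit H.runit A.runit H'.counit_unit_smult)

lemma core_lhs_unit_A:
  "lin (\<lambda>(\<kappa>, k, c, g2). smult (e' g2) (bv (\<kappa>, k, c))) (lin (\<lambda>b. core_lhs b h) uA)
   = lin (\<lambda>(h1, h2). lin (\<lambda>(g, x). bv (h1, g, x)) (f h2)) (D' h)"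
  apply (simp add: core_lhs_def bic_twist_pair smash_twist_pair lin_expand mult_inward R'.unit
      R.unit
      H.lunit A.lunit)
  apply (simp only: H_brace)
  apply (simp add: lin_fun_smult lin_fun_smult_split H'.rcounit)
  apply (simp only: H.coassoc)
  apply (simp only: lin_swap_split[where w="D' _" and v="D _"])
  apply (simp only: H.assoc H.lantipode)
  apply (simp add: H.runit lin_fun_smult lin_fun_smult_split H.rcounit)
  done

lemma core_rhs_unit_A:
  "lin (\<lambda>(\<kappa>, k, c, g2). smult (e' g2) (bv (\<kappa>, k, c))) (lin (\<lambda>b. core_rhs b h) uA)
   = lin (\<lambda>(h1, h2). lin (\<lambda>(g, x). lin (\<lambda>(g1, g2). lin (\<lambda>(g11, g12). lin (\<lambda>(f', y).
       tens (mulv mH (mulv mH (mulv mH (bv g11) (S g2)) (bv f')) (bv h2)) (tens (bv g12) (bv y)))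
     (r' x)) (D' g1)) (D g)) (f h1)) (D h)"
  by (simp add: core_rhs_def bic_twist_pair smash_twist_pair lin_expand mult_inward R.unit H.lunit
      A.lunit H'.rcounit H.assoc)

lemma core_eq_iff_conditions:
  "(\<forall>b h. core_lhs b h = core_rhs b h) \<longleftrightarrow> (\<forall>a. cond_A a) \<and> (\<forall>h. cond_H h)"
proof
  assume core: "\<forall>b h. core_lhs b h = core_rhs b h"
  then have "(\<lambda>h. core_lhs a h) = (\<lambda>h. core_rhs a h)" and "(\<lambda>b. core_lhs b h) = (\<lambda>b. core_rhs b h)"
    for a h by auto
  then show "(\<forall>a. cond_A a) \<and> (\<forall>h. cond_H h)"
    unfolding cond_A_def cond_H_def
    by (metis core_lhs_unit_H core_rhs_unit_H core_lhs_unit_A core_rhs_unit_A)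
qed (use core_eq_of_conditions in blast)

lemma frame_inj: "frame a X = frame a Y \<Longrightarrow> X a = Y a"
  by (metis frame_counit)

lemma bicrossed_coproduct_eq: "bicrossed_coproduct mA DA mH D r f = Bic.tw_comult"
proof
  fix p :: "'a \<times> 'h"
  show "bicrossed_coproduct mA DA mH D r f p = Bic.tw_comult p"
    by (cases p)
       (simp add: bicrossed_coproduct_def Bic.tw_comult_pair bic_twist_pair lin_expand mult_inward,
        simp only: lin_swap_split[where w="D _" and v="r _"])
qed

lemma smash_coproduct_eq: "smash_coproduct DA mH D' r' = Sm.tw_comult"
proof
  fix p :: "'a \<times> 'h"
  show "smash_coproduct DA mH D' r' p = Sm.tw_comult p"
    by (cases p)
       (simp add: smash_coproduct_def Sm.tw_comult_pair smash_twist_pair lin_expand mult_inward,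
        simp only: lin_swap_split[where w="D' _" and v="r' _"])
qed

theorem hopf_brace_iff_conditions:
  "hopf_brace_coproducts (tmul mA mH) (tens uA uH) (bicrossed_coproduct mA DA mH D r f)
     (smash_coproduct DA mH D' r')
   \<longleftrightarrow> (\<forall>a. cond_A a) \<and> (\<forall>h. cond_H h)"
proof -
  have "hopf_brace_coproducts (tmul mA mH) (tens uA uH) (bicrossed_coproduct mA DA mH D r f)
      (smash_coproduct DA mH D' r')
    \<longleftrightarrow> (\<forall>a h. frame a (\<lambda>b. core_lhs b h) = frame a (\<lambda>b. core_rhs b h))"
    unfolding bicrossed_coproduct_eq smash_coproduct_eq
      hopf_brace_coproducts_iff[OF Bic.tw_hopf Sm.tw_hopf]
      split_paired_All brace_lhs_frame brace_rhs_frame ..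
  also have "\<dots> \<longleftrightarrow> (\<forall>b h. core_lhs b h = core_rhs b h)"
  proof (intro iffI allI)
    fix b h
    assume "\<forall>a h. frame a (\<lambda>b. core_lhs b h) = frame a (\<lambda>b. core_rhs b h)"
    then show "core_lhs b h = core_rhs b h"
      using frame_inj[of b "\<lambda>b. core_lhs b h" "\<lambda>b. core_rhs b h"] by simp
  qed simp
  also have "\<dots> \<longleftrightarrow> (\<forall>a. cond_A a) \<and> (\<forall>h. cond_H h)"
    by (rule core_eq_iff_conditions)
  finally show ?thesis .
qed

end

theorem proposition4p3:
  fixes mA :: "'a \<Rightarrow> 'a \<Rightarrow> ('a \<Rightarrow>\<^sub>0 'k::field)" and uA :: "'a \<Rightarrow>\<^sub>0 'k"
    and \<Delta>A :: "'a \<Rightarrow> ('a \<times> 'a \<Rightarrow>\<^sub>0 'k)" and \<epsilon>A :: "'a \<Rightarrow> 'k" and SA :: "'a \<Rightarrow> ('a \<Rightarrow>\<^sub>0 'k)"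
    and mH :: "'h \<Rightarrow> 'h \<Rightarrow> ('h \<Rightarrow>\<^sub>0 'k)" and uH :: "'h \<Rightarrow>\<^sub>0 'k"
    and \<Delta> :: "'h \<Rightarrow> ('h \<times> 'h \<Rightarrow>\<^sub>0 'k)" and \<epsilon> :: "'h \<Rightarrow> 'k" and S :: "'h \<Rightarrow> ('h \<Rightarrow>\<^sub>0 'k)"
    and \<Delta>' :: "'h \<Rightarrow> ('h \<times> 'h \<Rightarrow>\<^sub>0 'k)" and \<epsilon>' :: "'h \<Rightarrow> 'k" and T :: "'h \<Rightarrow> ('h \<Rightarrow>\<^sub>0 'k)"
    and \<rho> :: "'a \<Rightarrow> ('h \<times> 'a \<Rightarrow>\<^sub>0 'k)" and \<phi> :: "'h \<Rightarrow> ('h \<times> 'a \<Rightarrow>\<^sub>0 'k)"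
    and \<rho>' :: "'a \<Rightarrow> ('h \<times> 'a \<Rightarrow>\<^sub>0 'k)"
  assumes hopfA: "is_hopf_algebra mA uA \<Delta>A \<epsilon>A SA"
    and braceH: "is_hopf_brace mH uH \<Delta> \<epsilon> S \<Delta>' \<epsilon>' T"
    and commH: "is_commutative mH"
    and mp: "hopf_matched_pair mA uA \<Delta>A \<epsilon>A SA mH uH \<Delta> \<epsilon> S \<rho> \<phi>"
    and cb: "left_comodule_bialgebra mH uH \<Delta>' \<epsilon>' mA uA \<Delta>A \<epsilon>A \<rho>'"
  shows "hopf_brace_coproducts (tmul mA mH) (tens uA uH)
            (bicrossed_coproduct mA \<Delta>A mH \<Delta> \<rho> \<phi>) (smash_coproduct \<Delta>A mH \<Delta>' \<rho>')
    \<longleftrightarrow>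
    (\<forall>a. lin (\<lambda>(g, b). lin (\<lambda>(g2, c). bv (g, g2, c)) (\<rho> b)) (\<rho>' a)
       = lin (\<lambda>(h, b). lin (\<lambda>(h1, h2). lin (\<lambda>(h11, h12). lin (\<lambda>(g, c).
            tens (mulv mH (mulv mH (bv h11) (S h2)) (bv g)) (tens (bv h12) (bv c)))
          (\<rho>' b)) (\<Delta>' h1)) (\<Delta> h)) (\<rho> a)) \<and>
    (\<forall>h. lin (\<lambda>(h1, h2). lin (\<lambda>(g, x). bv (h1, g, x)) (\<phi> h2)) (\<Delta>' h)
       = lin (\<lambda>(h1, h2). lin (\<lambda>(g, x). lin (\<lambda>(g1, g2). lin (\<lambda>(g11, g12). lin (\<lambda>(f, y).
            tens (mulv mH (mulv mH (mulv mH (bv g11) (S g2)) (bv f)) (bv h2))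
                 (tens (bv g12) (bv y)))
          (\<rho>' x)) (\<Delta>' g1)) (\<Delta> g)) (\<phi> h1)) (\<Delta> h))"
proof -
  interpret bicrossed_smash mA uA \<Delta>A \<epsilon>A SA mH uH \<Delta> \<epsilon> S \<Delta>' \<epsilon>' T \<rho> \<phi> \<rho>'
    using assms by (simp add: bicrossed_smash_def)
  show ?thesis
    using hopf_brace_iff_conditions unfolding cond_A_def cond_H_def .
qed

end
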